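(* Suppose Assumptions (A1)–(A4) below hold and $H_T=o(T)$. Let $\{\boldsymbol{x}_{i,t}\}$ be generated by Algorithm DOMFW (described in the context) with $K_t=1/(\rho\alpha_t)=\lceil\varepsilon_2T^{\gamma_2}\rceil+1$ for all $t\in\{1,\dots,T\}$, where $\rho\ge1$, $\varepsilon_2>0$, $0<\gamma_2\le1$. Then for every $j\in\mathcal{V}$, $$\mathbf{Regret}_d^j(T)\le\mathcal{O}(T^{1-\gamma_2}+H_T),\qquad\mathbf{N}_{LO}\le\mathcal{O}(T^{1+\gamma_2}).$$ In particular, if $1-\log_TH_T\le\gamma_2\le1$, then $\mathbf{Regret}_d^j(T)\le\mathcal{O}(1+H_T)$ and $\mathbf{N}_{LO}\le\mathcal{O}(T^{2-\log_TH_T})$.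
   Context: Network: $n$ agents, $\mathcal{V}=\{1,\dots,n\}$, time-varying directed graphs $\mathcal{G}_t=(\mathcal{V},\mathcal{E}_t,A_t)$; $\mathcal{N}_i^{in}(t)=\{j:(j,i)\in\mathcal{E}_t\}\cup\{i\}$, $[A_t]_{ij}>0$ iff $j\in\mathcal{N}_i^{in}(t)$, else $0$. (A1): (a) there is $\zeta>0$ with $[A_t]_{ij}>\zeta$ whenever $[A_t]_{ij}>0$; (b) $\mathcal{G}_t$ strongly connected for all $t$; (c) each $A_t$ doubly stochastic. (A2): $\boldsymbol{X}\subset\mathbb{R}^d$ convex compact, diameter at most $M$. (A3): $|f_{i,t}(\boldsymbol{x})-f_{i,t}(\boldsymbol{z})|\le L_X\|\boldsymbol{x}-\boldsymbol{z}\|$ on $\boldsymbol{X}$. (A4): $f_{i,t}(\boldsymbol{x})-f_{i,t}(\boldsymbol{z})\le\langle\nabla f_{i,t}(\boldsymbol{z}),\boldsymbol{x}-\boldsymbol{z}\rangle+\frac{G_X}{2}\|\boldsymbol{x}-\boldsymbol{z}\|^2$ on $\boldsymbol{X}$. Losses $f_{i,t}$ convex, differentiable on $\boldsymbol{X}$; $F_t=\sum_if_{i,t}$; $\boldsymbol{x}_t^*\in\arg\min_{\boldsymbol{X}}F_t$. $\mathbf{Regret}_d^j(T)=\sum_{t=1}^TF_t(\boldsymbol{x}_{j,t})-\sum_{t=1}^TF_t(\boldsymbol{x}_t^* )$; $H_T=\sum_{t=1}^{T-1}\max_{i}\max_{\boldsymbol{x}\in\boldsymbol{X}}|f_{i,t+1}(\boldsymbol{x})-f_{i,t}(\boldsymbol{x})|$.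 Algorithm DOMFW: initial points $\boldsymbol{x}_{i,1}\in\boldsymbol{X}$. For $t=1,\dots,T$: $\boldsymbol{x}_{i,t}^1=\boldsymbol{x}_{i,t}$; for $k=1,\dots,K_t$: $\hat{\boldsymbol{x}}_{i,t}^k=\sum_j[A_t]_{ij}\boldsymbol{x}_{j,t}^k$; $\overline{\nabla}f_{i,t}^1=\nabla f_{i,t}(\hat{\boldsymbol{x}}_{i,t}^1)$, and for $k\ge2$, $\overline{\nabla}f_{i,t}^k=\widehat{\nabla}f_{i,t}^{k-1}+\nabla f_{i,t}(\hat{\boldsymbol{x}}_{i,t}^k)-\nabla f_{i,t}(\hat{\boldsymbol{x}}_{i,t}^{k-1})$; $\widehat{\nabla}f_{i,t}^k=\sum_j[A_t]_{ij}\overline{\nabla}f_{j,t}^k$; $\boldsymbol{v}_{i,t}^k\in\arg\min_{\boldsymbol{x}\in\boldsymbol{X}}\langle\boldsymbol{x},\widehat{\nabla}f_{i,t}^k\rangle$ (one call of the linear oracle); $\boldsymbol{x}_{i,t}^{k+1}=\hat{\boldsymbol{x}}_{i,t}^k+\alpha_t(\boldsymbol{v}_{i,t}^k-\hat{\boldsymbol{x}}_{i,t}^k)$. Then $\boldsymbol{x}_{i,t+1}=\boldsymbol{x}_{i,t}^{K_t+1}$. $\mathbf{N}_{LO}$ denotes the number of linear-oracle calls made (by an agent) over $T$ rounds, i.e. $\sum_{t=1}^TK_t$. The $\mathcal{O}(\cdot)$ bounds are as functions of $T$ and $H_T$, with constants independent of $T$ (depending on $n,\zeta,M,L_X,G_X,\rho,\varepsilon_2,\gamma_2$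 and the initial points).
   Formalization: The bound $\mathbf{N}_{LO}\le\mathcal{O}(T^{2-\log_TH_T})$ is claimed only for $\gamma_2=1-\log_TH_T$, and the $\mathcal{O}$ constants may also depend on the losses $f_{i,t}$ and the matrices $A_t$. Each condition added here is assumed in the paper as well or is needed for the statement above to hold. *)

theory Defs
  imports "HOL-Analysis.Analysis" "HOL-Library.Landau_Symbols"
begin

text \<open>Agents are indexed by 0..n-1. A t i j is the (i,j) entry of the weight matrix A_t,
E t is the edge set of the digraph G_t (pairs (j,i) meaning an edge from j to i).\<close>

definition strongly_connected :: "nat \<Rightarrow> (nat \<times> nat) set \<Rightarrow> bool" where
  "strongly_connected n E \<longleftrightarrow> (\<forall>i<n. \<forall>j<n. (i, j) \<in> E\<^sup>*)"

definition Fsum :: "nat \<Rightarrow> (nat \<Rightarrow> nat \<Rightarrow> 'a \<Rightarrow> real) \<Rightarrow> nat \<Rightarrow> 'a \<Rightarrow> real" where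
  "Fsum n f t y = (\<Sum>i<n. f i t y)"

definition regret_d ::
  "nat \<Rightarrow> (nat \<Rightarrow> nat \<Rightarrow> 'a \<Rightarrow> real) \<Rightarrow> (nat \<Rightarrow> nat \<Rightarrow> 'a) \<Rightarrow> (nat \<Rightarrow> 'a) \<Rightarrow> nat \<Rightarrow> nat \<Rightarrow> real" where
  "regret_d n f x xstar j T =
     (\<Sum>t=1..T. Fsum n f t (x j t)) - (\<Sum>t=1..T. Fsum n f t (xstar t))"

definition H_var :: "nat \<Rightarrow> 'a set \<Rightarrow> (nat \<Rightarrow> nat \<Rightarrow> 'a \<Rightarrow> real) \<Rightarrow> nat \<Rightarrow> real" where
  "H_var n X f T =
     (\<Sum>t=1..<T. (MAX i\<in>{..<n}. (SUP y\<in>X. \<bar>f i (Suc t) y - f i t y\<bar>)))"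

text \<open>The iterates x i t (t = 1..T+1) together with all auxiliary quantities
 xk i t k = x_{i,t}^k, xh = hat x, gb = bar nabla, gh = hat nabla, v = oracle outputs,
 are generated by DOMFW over T rounds with inner iteration counts K t and step sizes al t.\<close>
definition DOMFW ::
  "nat \<Rightarrow> (nat \<Rightarrow> nat \<Rightarrow> nat \<Rightarrow> real) \<Rightarrow> (nat \<Rightarrow> nat \<Rightarrow> 'a \<Rightarrow> 'a::real_inner) \<Rightarrow> 'a set
   \<Rightarrow> (nat \<Rightarrow> 'a) \<Rightarrow> nat \<Rightarrow> (nat \<Rightarrow> nat) \<Rightarrow> (nat \<Rightarrow> real)
   \<Rightarrow> (nat \<Rightarrow> nat \<Rightarrow> 'a) \<Rightarrow> (nat \<Rightarrow> nat \<Rightarrow> nat \<Rightarrow> 'a) \<Rightarrow> (nat \<Rightarrow> nat \<Rightarrow> nat \<Rightarrow> 'a)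
   \<Rightarrow> (nat \<Rightarrow> nat \<Rightarrow> nat \<Rightarrow> 'a) \<Rightarrow> (nat \<Rightarrow> nat \<Rightarrow> nat \<Rightarrow> 'a) \<Rightarrow> (nat \<Rightarrow> nat \<Rightarrow> nat \<Rightarrow> 'a) \<Rightarrow> bool" where
  "DOMFW n A grad X x1 T K al x xk xh gb gh v \<longleftrightarrow>
    (\<forall>i<n. x i 1 = x1 i) \<and>
    (\<forall>i<n. \<forall>t\<in>{1..T}.
       xk i t 1 = x i t \<and>
       (\<forall>k\<in>{1..K t}.
          xh i t k = (\<Sum>j<n. A t i j *\<^sub>R xk j t k) \<and>
          gb i t k = (if k = 1 then grad i t (xh i t 1)
                      else gh i t (k - 1) + grad i t (xh i t k) - grad i t (xh i t (k - 1))) \<and>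
          gh i t k = (\<Sum>j<n. A t i j *\<^sub>R gb j t k) \<and>
          v i t k \<in> X \<and> (\<forall>z\<in>X. inner (v i t k) (gh i t k) \<le> inner z (gh i t k)) \<and>
          xk i t (Suc k) = xh i t k + al t *\<^sub>R (v i t k - xh i t k)) \<and>
       x i (Suc t) = xk i t (K t + 1))"

end

theory Submission
  imports Defs
begin

(* The agents' average ybar performs an inexact Frank-Wolfe step on F_t with step alpha. Its
   error is controlled by the consensus error of the iterates and by the tracking error of the
   gradient estimates; mixing with the doubly stochastic weights contracts both by a fixed factor
   mix_rate < 1 (strong connectivity plus the lower bound zeta on the weights), so their totals
   over the T K inner steps are O(1 + T alpha). The optimality gap of ybar shrinks by
   (1 - alpha)^K <= exp (-1/rho) within a round and grows by at most 2 n times the function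
   variation between rounds, which yields regret <= C (1 + T alpha + H_T); the schedule gives
   T alpha <= T^(1-gamma) / epsilon. Gradients are only known through derivatives within X, so
   they are bounded and Lipschitz only after projection onto the directions of X; this follows
   from convexity and the quadratic upper bound (A4), testing against points of a relative
   interior ball. *)

section \<open>Agent averages and consensus error\<close>

definition avg :: "nat \<Rightarrow> (nat \<Rightarrow> 'a::real_vector) \<Rightarrow> 'a" where
  "avg n w = (1 / real n) *\<^sub>R (\<Sum>i<n. w i)"

definition l2 :: "nat \<Rightarrow> (nat \<Rightarrow> 'a::real_normed_vector) \<Rightarrow> real" where
  "l2 n w = L2_set (\<lambda>i. norm (w i)) {..<n}"

definition dev :: "nat \<Rightarrow> (nat \<Rightarrow> 'a::real_normed_vector) \<Rightarrow> real" where
  "dev n w = l2 n (\<lambda>i. w i - avg n w)"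

lemma avg_cong: "(\<And>i. i < n \<Longrightarrow> p i = q i) \<Longrightarrow> avg n p = avg n q"
  unfolding avg_def by simp

lemma l2_cong: "(\<And>i. i < n \<Longrightarrow> p i = q i) \<Longrightarrow> l2 n p = l2 n q"
  unfolding l2_def by (rule L2_set_cong) auto

lemma dev_cong: "(\<And>i. i < n \<Longrightarrow> p i = q i) \<Longrightarrow> dev n p = dev n q"
  unfolding dev_def using avg_cong[of n p q] by (intro l2_cong) simp

lemma l2_nonneg [simp]: "0 \<le> l2 n w"
  by (simp add: l2_def)

lemma dev_nonneg [simp]: "0 \<le> dev n w"
  by (simp add: dev_def)

lemma l2_mono: "(\<And>i. i < n \<Longrightarrow> norm (p i) \<le> norm (q i)) \<Longrightarrow> l2 n p \<le> l2 n q"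
  unfolding l2_def by (rule L2_set_mono) auto

lemma l2_triangle: "l2 n (\<lambda>i. p i + q i) \<le> l2 n p + l2 n q"
proof -
  have "l2 n (\<lambda>i. p i + q i) \<le> L2_set (\<lambda>i. norm (p i) + norm (q i)) {..<n}"
    unfolding l2_def by (rule L2_set_mono) (auto intro: norm_triangle_ineq)
  also have "\<dots> \<le> l2 n p + l2 n q"
    unfolding l2_def by (rule L2_set_triangle_ineq)
  finally show ?thesis .
qed

lemma l2_scaleR: "l2 n (\<lambda>i. a *\<^sub>R p i) = \<bar>a\<bar> * l2 n p"
  unfolding l2_def by (simp add: L2_set_right_distrib)

lemma l2_diff: "l2 n (\<lambda>i. p i - q i) \<le> l2 n p + l2 n q"
  using l2_triangle[of n p "\<lambda>i. - q i"] l2_scaleR[of n "-1" q] by simp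

lemma l2_le_const:
  assumes "\<And>i. i < n \<Longrightarrow> norm (p i) \<le> b" and "0 \<le> b"
  shows "l2 n p \<le> sqrt (real n) * b"
proof -
  have "l2 n p \<le> L2_set (\<lambda>i. b) {..<n}"
    unfolding l2_def by (rule L2_set_mono) (use assms in auto)
  then show ?thesis
    using assms(2) by (simp add: L2_set_constant)
qed

lemma norm_le_l2: "i < n \<Longrightarrow> norm (p i) \<le> l2 n p"
  unfolding l2_def by (rule member_le_L2_set) auto

lemma sum_norm_le_l2: "(\<Sum>i<n. norm (p i)) \<le> sqrt (real n) * l2 n p"
proof -
  have "(\<Sum>i<n. norm (p i)) = (\<Sum>i<n. \<bar>norm (p i)\<bar> * \<bar>1\<bar>)" by simp
  also have "\<dots> \<le> L2_set (\<lambda>i. norm (p i)) {..<n} * L2_set (\<lambda>i. 1) {..<n}"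
    by (rule L2_set_mult_ineq)
  also have "\<dots> = sqrt (real n) * l2 n p"
    by (simp add: L2_set_constant l2_def)
  finally show ?thesis .
qed

lemma l2_power2: "(l2 n p)\<^sup>2 = (\<Sum>i<n. (norm (p i))\<^sup>2)"
  unfolding l2_def L2_set_def by (simp add: sum_nonneg)

lemma avg_lincomb: "avg n (\<lambda>i. a *\<^sub>R p i + b *\<^sub>R q i) = a *\<^sub>R avg n p + b *\<^sub>R avg n q"
  by (simp add: avg_def sum.distrib scaleR_sum_right[symmetric] algebra_simps)

lemma avg_add: "avg n (\<lambda>i. p i + q i) = avg n p + avg n q"
  by (simp add: avg_def sum.distrib algebra_simps)

lemma avg_diff: "avg n (\<lambda>i. p i - q i) = avg n p - avg n q"
  by (simp add: avg_def sum_subtractf algebra_simps)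

lemma avg_const: "n \<ge> 1 \<Longrightarrow> avg n (\<lambda>i. c) = c"
  by (simp add: avg_def scaleR_scaleR sum_constant_scaleR)

lemma sum_diff_avg: "n \<ge> 1 \<Longrightarrow> (\<Sum>i<n. p i - avg n p) = 0"
  by (simp add: avg_def sum_subtractf scaleR_scaleR sum_constant_scaleR)

lemma avg_in_convex:
  assumes "convex X" "n \<ge> 1" "\<And>i. i < n \<Longrightarrow> p i \<in> X"
  shows "avg n p \<in> X"
proof -
  have "(\<Sum>i<n. (1 / real n) *\<^sub>R p i) \<in> X"
    by (rule convex_sum) (use assms in auto)
  then show ?thesis by (simp add: avg_def scaleR_sum_right)
qed

lemma dev_lincomb: "dev n (\<lambda>i. a *\<^sub>R p i + b *\<^sub>R q i) \<le> \<bar>a\<bar> * dev n p + \<bar>b\<bar> * dev n q"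
proof -
  have "dev n (\<lambda>i. a *\<^sub>R p i + b *\<^sub>R q i)
      = l2 n (\<lambda>i. a *\<^sub>R (p i - avg n p) + b *\<^sub>R (q i - avg n q))"
    unfolding dev_def avg_lincomb by (simp add: algebra_simps)
  also have "\<dots> \<le> l2 n (\<lambda>i. a *\<^sub>R (p i - avg n p)) + l2 n (\<lambda>i. b *\<^sub>R (q i - avg n q))"
    by (rule l2_triangle)
  finally show ?thesis by (simp add: l2_scaleR dev_def)
qed

lemma dev_add: "dev n (\<lambda>i. p i + q i) \<le> dev n p + dev n q"
  using dev_lincomb[of n 1 p 1 q] by simp

lemma norm_diff_avg_le_dev: "i < n \<Longrightarrow> norm (p i - avg n p) \<le> dev n p"
  unfolding dev_def by (rule norm_le_l2)

lemma dev_le_l2_diff: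
  fixes p :: "nat \<Rightarrow> 'a::real_inner"
  shows "dev n p \<le> l2 n (\<lambda>i. p i - c)"
proof (cases "n = 0")
  case True then show ?thesis by (simp add: dev_def l2_def)
next
  case False
  let ?m = "avg n p"
  have "(\<Sum>i<n. (norm (p i - c))\<^sup>2)
      = (\<Sum>i<n. (norm (p i - ?m))\<^sup>2 + 2 * inner (p i - ?m) (?m - c) + (norm (?m - c))\<^sup>2)"
  proof (rule sum.cong)
    fix i
    have "(p i - ?m) + (?m - c) = p i - c" by (simp add: algebra_simps)
    then show "(norm (p i - c))\<^sup>2
        = (norm (p i - ?m))\<^sup>2 + 2 * inner (p i - ?m) (?m - c) + (norm (?m - c))\<^sup>2"
      using dot_norm[of "p i - ?m" "?m - c"] by simp
  qed simp
  also have "\<dots> = (\<Sum>i<n. (norm (p i - ?m))\<^sup>2) + 2 * inner (\<Sum>i<n. p i - ?m) (?m - c)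
                  + real n * (norm (?m - c))\<^sup>2"
    by (simp add: sum.distrib sum_distrib_left inner_sum_left)
  also have "\<dots> \<ge> (\<Sum>i<n. (norm (p i - ?m))\<^sup>2)"
    using False by (simp add: sum_diff_avg)
  finally have "(dev n p)\<^sup>2 \<le> (l2 n (\<lambda>i. p i - c))\<^sup>2"
    by (simp add: dev_def l2_power2)
  then show ?thesis
    by (simp add: power2_le_iff_abs_le)
qed

lemma dev_le_diameter:
  assumes "\<And>i. i < n \<Longrightarrow> p i \<in> X" and "c \<in> X"
    and "\<And>y z. y \<in> X \<Longrightarrow> z \<in> X \<Longrightarrow> norm (y - z) \<le> M"
  shows "dev n (p :: nat \<Rightarrow> 'a::real_inner) \<le> sqrt (real n) * M"
proof -
  have "dev n p \<le> l2 n (\<lambda>i. p i - c)" by (rule dev_le_l2_diff)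
  also have "\<dots> \<le> sqrt (real n) * M"
    using assms order_trans[OF norm_ge_zero assms(3)[OF assms(2) assms(2)]]
    by (intro l2_le_const) auto
  finally show ?thesis .
qed

section \<open>Contraction under doubly stochastic mixing\<close>

lemma norm_convex_comb_power2:
  fixes z :: "nat \<Rightarrow> 'a::real_inner"
  assumes "(\<Sum>j<n. a j) = 1"
  shows "(norm (\<Sum>j<n. a j *\<^sub>R z j))\<^sup>2
     = (\<Sum>j<n. a j * (norm (z j))\<^sup>2) - (1/2) * (\<Sum>j<n. \<Sum>k<n. a j * a k * (norm (z j - z k))\<^sup>2)"
proof -
  have e: "(norm (z j - z k))\<^sup>2 = (norm (z j))\<^sup>2 + (norm (z k))\<^sup>2 - 2 * inner (z j) (z k)" for j k
    by (simp add: power2_norm_eq_inner inner_diff_left inner_diff_right inner_commute)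
  have "(\<Sum>j<n. \<Sum>k<n. a j * a k * (norm (z j - z k))\<^sup>2)
     = (\<Sum>j<n. \<Sum>k<n. a j * a k * (norm (z j))\<^sup>2) + (\<Sum>j<n. \<Sum>k<n. a j * a k * (norm (z k))\<^sup>2)
       - 2 * (\<Sum>j<n. \<Sum>k<n. a j * a k * inner (z j) (z k))"
    by (simp add: e algebra_simps sum.distrib sum_subtractf sum_distrib_left)
  also have "(\<Sum>j<n. \<Sum>k<n. a j * a k * (norm (z j))\<^sup>2) = (\<Sum>j<n. a j * (norm (z j))\<^sup>2)"
    using assms by (simp add: sum_distrib_left[symmetric] sum_distrib_right[symmetric]
        mult.commute mult.left_commute)
  also have "(\<Sum>j<n. \<Sum>k<n. a j * a k * (norm (z k))\<^sup>2) = (\<Sum>j<n. a j * (norm (z j))\<^sup>2)"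
    using assms by (subst sum.swap) (simp add: sum_distrib_left[symmetric]
        sum_distrib_right[symmetric] mult.commute mult.left_commute)
  also have "(\<Sum>j<n. \<Sum>k<n. a j * a k * inner (z j) (z k)) = (norm (\<Sum>j<n. a j *\<^sub>R z j))\<^sup>2"
    unfolding power2_norm_eq_inner inner_sum_left
    by (simp add: inner_sum_right sum_distrib_left mult.assoc) (subst sum.swap, simp add: inner_commute)
  finally show ?thesis by linarith
qed

lemma avg_mix:
  assumes "\<And>j. j < n \<Longrightarrow> (\<Sum>i<n. a i j) = 1"
  shows "avg n (\<lambda>i. \<Sum>j<n. a i j *\<^sub>R w j) = avg n w"
proof -
  have "(\<Sum>i<n. \<Sum>j<n. a i j *\<^sub>R w j) = (\<Sum>j<n. (\<Sum>i<n. a i j) *\<^sub>R w j)"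
    by (subst sum.swap) (simp add: scaleR_sum_left)
  also have "\<dots> = (\<Sum>j<n. w j)" using assms by simp
  finally show ?thesis by (simp add: avg_def)
qed

lemma sum_norm_mix_power2_le:
  fixes z :: "nat \<Rightarrow> 'a::real_inner"
  assumes nonneg: "\<And>i j. i < n \<Longrightarrow> j < n \<Longrightarrow> 0 \<le> a i j"
    and rows: "\<And>i. i < n \<Longrightarrow> (\<Sum>j<n. a i j) = 1"
    and cols: "\<And>j. j < n \<Longrightarrow> (\<Sum>i<n. a i j) = 1"
  shows "(\<Sum>i<n. (norm (\<Sum>j<n. a i j *\<^sub>R z j))\<^sup>2)
    \<le> (\<Sum>j<n. (norm (z j))\<^sup>2) - (1/2) * (\<Sum>i<n. \<Sum>j<n. a i j * a i i * (norm (z j - z i))\<^sup>2)"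
proof -
  have row: "(norm (\<Sum>j<n. a i j *\<^sub>R z j))\<^sup>2
      \<le> (\<Sum>j<n. a i j * (norm (z j))\<^sup>2) - (1/2) * (\<Sum>j<n. a i j * a i i * (norm (z j - z i))\<^sup>2)"
    if i: "i < n" for i
  proof -
    have "a i j * a i i * (norm (z j - z i))\<^sup>2 \<le> (\<Sum>k<n. a i j * a i k * (norm (z j - z k))\<^sup>2)"
      if "j < n" for j
      using member_le_sum[of i "{..<n}" "\<lambda>k. a i j * a i k * (norm (z j - z k))\<^sup>2"] i that nonneg
      by simp
    then have "(\<Sum>j<n. a i j * a i i * (norm (z j - z i))\<^sup>2)
        \<le> (\<Sum>j<n. \<Sum>k<n. a i j * a i k * (norm (z j - z k))\<^sup>2)"
      by (intro sum_mono) simp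
    then show ?thesis using norm_convex_comb_power2[where a="a i" and z=z, OF rows[OF i]] by linarith
  qed
  have "(\<Sum>i<n. \<Sum>j<n. a i j * (norm (z j))\<^sup>2) = (\<Sum>j<n. (norm (z j))\<^sup>2)"
    by (subst sum.swap) (simp add: sum_distrib_right[symmetric] cols)
  moreover have "(\<Sum>i<n. (norm (\<Sum>j<n. a i j *\<^sub>R z j))\<^sup>2)
      \<le> (\<Sum>i<n. (\<Sum>j<n. a i j * (norm (z j))\<^sup>2)
                    - (1/2) * (\<Sum>j<n. a i j * a i i * (norm (z j - z i))\<^sup>2))"
    using row by (intro sum_mono) simp
  ultimately show ?thesis
    by (simp add: sum_subtractf sum_distrib_left)
qed

lemma norm_diff_le_relpow:
  fixes z :: "nat \<Rightarrow> 'a::real_normed_vector"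
  assumes "\<And>u v. (u, v) \<in> E \<Longrightarrow> norm (z u - z v) \<le> s"
  shows "(i, k) \<in> E ^^ m \<Longrightarrow> norm (z i - z k) \<le> real m * s"
proof (induction m arbitrary: k)
  case 0 then show ?case by simp
next
  case (Suc m)
  then obtain y where y: "(i, y) \<in> E ^^ m" "(y, k) \<in> E" by auto
  have "norm (z i - z k) \<le> norm (z i - z y) + norm (z y - z k)"
    using norm_triangle_ineq[of "z i - z y" "z y - z k"] by simp
  also have "\<dots> \<le> real m * s + s" using Suc.IH[OF y(1)] assms[OF y(2)] by simp
  finally show ?case by (simp add: algebra_simps)
qed

text \<open>A path in a strongly connected graph on \<open>n\<close> nodes needs at most \<open>card E \<le> n\<^sup>2\<close> edges.\<close>

lemma centred_norm_le_edge_variation: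
  fixes z :: "nat \<Rightarrow> 'a::real_normed_vector"
  assumes n: "n \<ge> 1" and E: "E \<subseteq> {..<n} \<times> {..<n}" and sc: "strongly_connected n E"
    and centred: "(\<Sum>j<n. z j) = 0"
    and edge: "\<And>u v. (u, v) \<in> E \<Longrightarrow> norm (z u - z v) \<le> s" and s: "0 \<le> s"
    and i: "i < n"
  shows "norm (z i) \<le> real n ^ 2 * s"
proof -
  have pair: "norm (z i - z k) \<le> real n ^ 2 * s" if "k < n" for k
  proof -
    have fin: "finite E" using E finite_subset by blast
    have "(i, k) \<in> E\<^sup>*" using sc i that unfolding strongly_connected_def by auto
    then obtain m where m: "m \<le> card E" "(i, k) \<in> E ^^ m"
      using rtrancl_finite_eq_relpow[OF fin] by auto
    have "card E \<le> n ^ 2"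
      using card_mono[OF _ E] by (simp add: power2_eq_square)
    then have "real m \<le> real n ^ 2"
      using m(1) by (metis le_trans of_nat_le_iff of_nat_power)
    then show ?thesis
      using norm_diff_le_relpow[OF edge m(2)] s by (meson mult_right_mono order_trans)
  qed
  have "real n *\<^sub>R z i = (\<Sum>k<n. z i - z k)"
    by (simp add: sum_subtractf centred sum_constant_scaleR)
  then have "real n * norm (z i) \<le> (\<Sum>k<n. norm (z i - z k))"
    by (metis norm_scaleR abs_of_nat norm_sum)
  also have "\<dots> \<le> real n * (real n ^ 2 * s)"
    using sum_mono[of "{..<n}", OF pair] by simp
  finally show ?thesis using n by simp
qed

lemma edge_diff_le_spread:
  fixes z :: "nat \<Rightarrow> 'a::real_normed_vector"
  assumes E: "E \<subseteq> {..<n} \<times> {..<n}" and uv: "(u, v) \<in> E"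
    and nonneg: "\<And>i j. i < n \<Longrightarrow> j < n \<Longrightarrow> 0 \<le> a i j"
    and supp: "\<And>i j. i < n \<Longrightarrow> j < n \<Longrightarrow> (j, i) \<in> E \<or> j = i \<Longrightarrow> \<zeta> < a i j"
    and \<zeta>: "\<zeta> > 0"
  shows "\<zeta>\<^sup>2 * (norm (z u - z v))\<^sup>2 \<le> (\<Sum>i<n. \<Sum>j<n. a i j * a i i * (norm (z j - z i))\<^sup>2)"
proof -
  have u: "u < n" and v: "v < n" using uv E by auto
  have row_nonneg: "0 \<le> (\<Sum>j<n. a i j * a i i * (norm (z j - z i))\<^sup>2)" if "i < n" for i
    using that nonneg by (intro sum_nonneg) simp
  have "\<zeta>\<^sup>2 \<le> a v u * a v v"
    unfolding power2_eq_square using supp[OF v u] supp[OF v v] uv \<zeta> by (intro mult_mono) auto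
  then have "\<zeta>\<^sup>2 * (norm (z u - z v))\<^sup>2 \<le> a v u * a v v * (norm (z u - z v))\<^sup>2"
    by (simp add: mult_right_mono)
  also have "\<dots> \<le> (\<Sum>j<n. a v j * a v v * (norm (z j - z v))\<^sup>2)"
    using member_le_sum[of u "{..<n}" "\<lambda>j. a v j * a v v * (norm (z j - z v))\<^sup>2"] u v nonneg
    by simp
  also have "\<dots> \<le> (\<Sum>i<n. \<Sum>j<n. a i j * a i i * (norm (z j - z i))\<^sup>2)"
    using v row_nonneg by (intro member_le_sum) auto
  finally show ?thesis .
qed

text \<open>The spread lost in \<open>sum_norm_mix_power2_le\<close> dominates every squared edge difference, and
  these control the whole deviation by \<open>centred_norm_le_edge_variation\<close>.\<close>

lemma dev_mix_power2_le:
  fixes w :: "nat \<Rightarrow> 'a::real_inner"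
  assumes n: "n \<ge> 1" and E: "E \<subseteq> {..<n} \<times> {..<n}" and sc: "strongly_connected n E"
    and nonneg: "\<And>i j. i < n \<Longrightarrow> j < n \<Longrightarrow> 0 \<le> a i j"
    and supp: "\<And>i j. i < n \<Longrightarrow> j < n \<Longrightarrow> (j, i) \<in> E \<or> j = i \<Longrightarrow> \<zeta> < a i j"
    and \<zeta>: "\<zeta> > 0"
    and rows: "\<And>i. i < n \<Longrightarrow> (\<Sum>j<n. a i j) = 1"
    and cols: "\<And>j. j < n \<Longrightarrow> (\<Sum>i<n. a i j) = 1"
  shows "(dev n (\<lambda>i. \<Sum>j<n. a i j *\<^sub>R w j))\<^sup>2 \<le> (1 - \<zeta>\<^sup>2 / (2 * real n ^ 5)) * (dev n w)\<^sup>2"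
proof -
  define z where "z j = w j - avg n w" for j
  define D where "D = (\<Sum>i<n. \<Sum>j<n. a i j * a i i * (norm (z j - z i))\<^sup>2)"
  have mix_z: "(\<Sum>j<n. a i j *\<^sub>R w j) - avg n w = (\<Sum>j<n. a i j *\<^sub>R z j)" if "i < n" for i
    using rows[OF that]
    by (simp add: z_def scaleR_diff_right sum_subtractf flip: scaleR_sum_left)
  have "avg n (\<lambda>i. \<Sum>j<n. a i j *\<^sub>R w j) = avg n w"
    by (rule avg_mix) (rule cols)
  then have lhs: "(dev n (\<lambda>i. \<Sum>j<n. a i j *\<^sub>R w j))\<^sup>2
      = (\<Sum>i<n. (norm (\<Sum>j<n. a i j *\<^sub>R z j))\<^sup>2)"
    unfolding dev_def l2_power2 by (intro sum.cong) (simp_all add: mix_z)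
  have rhs: "(dev n w)\<^sup>2 = (\<Sum>i<n. (norm (z i))\<^sup>2)"
    unfolding dev_def l2_power2 z_def ..
  have D0: "0 \<le> D" unfolding D_def using nonneg by (intro sum_nonneg) simp
  have edge: "norm (z u - z v) \<le> sqrt D / \<zeta>" if "(u, v) \<in> E" for u v
  proof -
    have "(\<zeta> * norm (z u - z v))\<^sup>2 \<le> D"
      unfolding D_def power_mult_distrib by (rule edge_diff_le_spread[OF E that nonneg supp \<zeta>])
    then have "\<zeta> * norm (z u - z v) \<le> sqrt D" by (simp add: real_le_rsqrt)
    then show ?thesis using \<zeta> by (simp add: field_simps)
  qed
  have "(\<Sum>j<n. z j) = 0" unfolding z_def using sum_diff_avg[OF n] .
  then have "norm (z i) \<le> real n ^ 2 * (sqrt D / \<zeta>)" if "i < n" for i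
    using centred_norm_le_edge_variation[OF n E sc _ edge _ that] D0 \<zeta> by simp
  then have "(\<Sum>j<n. (norm (z j))\<^sup>2) \<le> (\<Sum>j<n. (real n ^ 2 * (sqrt D / \<zeta>))\<^sup>2)"
    by (intro sum_mono power_mono) auto
  also have "\<dots> = real n ^ 5 * D / \<zeta>\<^sup>2"
    using D0 by (simp add: power_mult_distrib power_divide eval_nat_numeral)
  finally have "(\<Sum>j<n. (norm (z j))\<^sup>2) * \<zeta>\<^sup>2 / real n ^ 5 \<le> D"
    using n \<zeta> by (simp add: field_simps)
  then have "(\<Sum>j<n. (norm (z j))\<^sup>2) - D / 2
      \<le> (1 - \<zeta>\<^sup>2 / (2 * real n ^ 5)) * (\<Sum>j<n. (norm (z j))\<^sup>2)"
    by (simp add: field_simps)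
  moreover have "(\<Sum>i<n. (norm (\<Sum>j<n. a i j *\<^sub>R z j))\<^sup>2) \<le> (\<Sum>j<n. (norm (z j))\<^sup>2) - D / 2"
    using sum_norm_mix_power2_le[OF nonneg rows cols, of z] unfolding D_def by simp
  ultimately show ?thesis
    unfolding lhs rhs by linarith
qed

section \<open>Linear recursions\<close>

lemma linear_recursion_le:
  fixes a :: "nat \<Rightarrow> real"
  assumes rec: "\<And>k. k < N \<Longrightarrow> a (Suc k) \<le> q * a k + u"
    and q: "0 \<le> q" "q < 1" and u: "0 \<le> u"
  shows "a N \<le> q ^ N * a 0 + u / (1 - q)"
  using rec
proof (induction N)
  case 0 then show ?case using q u by simp
next
  case (Suc N)
  have "q * a N \<le> q * (q ^ N * a 0 + u / (1 - q))"
    using Suc q by (intro mult_left_mono) auto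
  then have "a (Suc N) \<le> q * (q ^ N * a 0 + u / (1 - q)) + u"
    using Suc.prems[of N] by simp
  also have "\<dots> = q ^ Suc N * a 0 + u / (1 - q)"
    using q by (simp add: field_simps)
  finally show ?case .
qed

lemma linear_recursion_sum_le:
  fixes a u :: "nat \<Rightarrow> real"
  assumes rec: "\<And>k. Suc k < N \<Longrightarrow> a (Suc k) \<le> q * a k + u k"
    and a: "\<And>k. k < N \<Longrightarrow> 0 \<le> a k" and q: "0 \<le> q" and N: "0 < N"
  shows "(1 - q) * (\<Sum>k<N. a k) \<le> a 0 + (\<Sum>k<N - 1. u k)"
proof -
  obtain m where Suc: "N = Suc m" using N gr0_implies_Suc by blast
  have "(\<Sum>k<N. a k) = a 0 + (\<Sum>k<m. a (Suc k))"
    unfolding Suc by (rule sum.lessThan_Suc_shift)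
  also have "(\<Sum>k<m. a (Suc k)) \<le> (\<Sum>k<m. q * a k + u k)"
    by (rule sum_mono) (use rec Suc in auto)
  also have "\<dots> = q * (\<Sum>k<m. a k) + (\<Sum>k<m. u k)"
    by (simp add: sum.distrib sum_distrib_left)
  also have "q * (\<Sum>k<m. a k) \<le> q * (\<Sum>k<N. a k)"
    unfolding Suc using a q Suc by (intro mult_left_mono sum_mono2) auto
  finally show ?thesis using Suc by (simp add: algebra_simps)
qed

lemma recursion_le_sum:
  fixes a u :: "nat \<Rightarrow> real"
  assumes rec: "\<And>k. k < N \<Longrightarrow> a (Suc k) \<le> q * a k + u k"
    and q: "0 \<le> q" "q \<le> 1" and u: "\<And>k. k < N \<Longrightarrow> 0 \<le> u k"
  shows "a N \<le> q ^ N * a 0 + (\<Sum>k<N. u k)"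
  using rec u
proof (induction N)
  case 0 then show ?case by simp
next
  case (Suc N)
  have "q * a N \<le> q * (q ^ N * a 0 + (\<Sum>k<N. u k))"
    using Suc q by (intro mult_left_mono) auto
  then have "a (Suc N) \<le> q * (q ^ N * a 0 + (\<Sum>k<N. u k)) + u N"
    using Suc.prems(1)[of N] by simp
  also have "\<dots> \<le> q ^ Suc N * a 0 + (\<Sum>k<N. u k) + u N"
  proof -
    have "q * (\<Sum>k<N. u k) \<le> (\<Sum>k<N. u k)"
      using q Suc.prems(2) by (intro mult_left_le_one_le sum_nonneg) auto
    then show ?thesis by (simp add: algebra_simps)
  qed
  finally show ?case by simp
qed

lemma sum_lessThan_pred_le:
  fixes g :: "nat \<Rightarrow> real"
  assumes "\<And>k. 0 \<le> g k"
  shows "(\<Sum>k<N - 1. g k) \<le> (\<Sum>k<N. g k)" and "(\<Sum>k<N - 1. g (Suc k)) \<le> (\<Sum>k<N. g k)"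
proof -
  show "(\<Sum>k<N - 1. g k) \<le> (\<Sum>k<N. g k)"
    using assms by (intro sum_mono2) auto
  show "(\<Sum>k<N - 1. g (Suc k)) \<le> (\<Sum>k<N. g k)"
  proof (cases N)
    case (Suc m)
    then show ?thesis using assms[of 0] by (simp add: sum.lessThan_Suc_shift del: sum.lessThan_Suc)
  qed simp
qed

section \<open>Projected gradients of smooth convex functions\<close>

lemma convex_on_gradient_ineq:
  fixes f :: "'a::real_inner \<Rightarrow> real"
  assumes cf: "convex_on X f" and cX: "convex X"
    and der: "(f has_derivative (\<lambda>h. inner g h)) (at z within X)"
    and z: "z \<in> X" and p: "p \<in> X"
  shows "f z + inner g (p - z) \<le> f p"
proof (cases "p = z")
  case True then show ?thesis by simp
next
  case False
  define N where "N = norm (p - z)"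
  have N: "N > 0" using False by (simp add: N_def)
  have "inner g (p - z) \<le> f p - f z + e" if e: "e > 0" for e
  proof -
    have "e / N > 0" using e N by simp
    then obtain d where d: "d > 0" and dd: "\<And>y. y \<in> X \<Longrightarrow> norm (y - z) < d \<Longrightarrow>
        norm (f y - f z - inner g (y - z)) \<le> e / N * norm (y - z)"
      using der unfolding has_derivative_within_alt by blast
    define s where "s = min (1/2) (d / (2 * N))"
    have s0: "s > 0" and s1: "s \<le> 1" using d N by (auto simp: s_def)
    define y where "y = (1 - s) *\<^sub>R z + s *\<^sub>R p"
    have yX: "y \<in> X" unfolding y_def using cX z p s0 s1 by (simp add: convex_alt)
    have yz: "y - z = s *\<^sub>R (p - z)" unfolding y_def by (simp add: algebra_simps)
    have "s * N \<le> d / 2" using N s0 by (simp add: s_def min_def field_simps split: if_splits)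
    then have "norm (y - z) < d" using d s0 by (simp add: yz N_def)
    then have "\<bar>f y - f z - s * inner g (p - z)\<bar> \<le> e * s"
      using dd[OF yX] N s0 by (simp add: yz N_def)
    moreover have "f y \<le> (1 - s) * f z + s * f p"
      unfolding y_def by (rule convex_onD[OF cf]) (use s0 s1 z p in auto)
    ultimately have "s * inner g (p - z) \<le> s * (f p - f z + e)" by (simp add: algebra_simps)
    then show ?thesis using s0 by simp
  qed
  then have "inner g (p - z) \<le> f p - f z" by (rule field_le_epsilon)
  then show ?thesis by simp
qed

text \<open>A gradient known only through derivatives within \<open>X\<close> is arbitrary orthogonally to the
  directions of \<open>X\<close>, so only its projection \<open>proj\<close> onto them can be bounded.\<close>

locale direction_basis =
  fixes X :: "'a::euclidean_space set" and c :: 'a and r :: real and B :: "'a set"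
  assumes centre_in: "c \<in> X" and radius_pos: "r > 0"
    and rel_ball_subset: "cball c r \<inter> affine hull X \<subseteq> X"
    and orthogonal_basis: "pairwise orthogonal B" and unit_basis: "\<And>b. b \<in> B \<Longrightarrow> norm b = 1"
    and finite_basis: "finite B" and span_basis: "span B = span ((\<lambda>x. x - c) ` X)"
begin

definition proj :: "'a \<Rightarrow> 'a" where
  "proj g = (\<Sum>b\<in>B. inner g b *\<^sub>R b)"

lemma proj_add: "proj (x + y) = proj x + proj y"
  by (simp add: proj_def inner_add_left scaleR_add_left sum.distrib)

lemma proj_diff: "proj (x - y) = proj x - proj y"
  by (simp add: proj_def inner_diff_left scaleR_diff_left sum_subtractf)

lemma proj_scaleR: "proj (a *\<^sub>R x) = a *\<^sub>R proj x"
  by (simp add: proj_def scaleR_sum_right)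

lemma proj_sum: "proj (\<Sum>j\<in>J. h j) = (\<Sum>j\<in>J. proj (h j))"
  unfolding proj_def inner_sum_left scaleR_sum_left by (rule sum.swap)

lemma proj_in_span: "proj g \<in> span B"
  unfolding proj_def by (intro span_sum span_scale span_base)

lemma inner_proj:
  assumes "d \<in> span B"
  shows "inner (proj g) d = inner g d"
proof -
  have "inner (g - proj g) b = 0" if b: "b \<in> B" for b
  proof -
    have "inner (proj g) b = (\<Sum>b'\<in>B. inner g b' * inner b' b)"
      by (simp add: proj_def inner_sum_left)
    also have "\<dots> = (\<Sum>b'\<in>{b}. inner g b' * inner b' b)"
      using orthogonal_basis b finite_basis unfolding pairwise_def orthogonal_def
      by (intro sum.mono_neutral_right) auto
    also have "\<dots> = inner g b"
      using unit_basis[OF b] by (simp add: inner_commute flip: power2_norm_eq_inner)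
    finally show ?thesis by (simp add: inner_diff_left)
  qed
  then have "orthogonal (g - proj g) d"
    by (intro orthogonal_to_span[OF assms]) (simp add: orthogonal_def)
  then show ?thesis by (simp add: orthogonal_def inner_diff_left)
qed

lemma diff_in_span: "x \<in> X \<Longrightarrow> y \<in> X \<Longrightarrow> x - y \<in> span B"
  using span_diff[of "x - c" _ "y - c"] by (simp add: span_basis span_base)

lemma centre_add_in:
  assumes "u \<in> span B" and "norm u \<le> r"
  shows "c + u \<in> X"
proof -
  have "affine hull X = (\<lambda>x. c + x) ` span ((\<lambda>x. - c + x) ` X)"
    using centre_in by (intro affine_hull_span_gen) (simp add: hull_inc)
  moreover have "(\<lambda>x. - c + x) ` X = (\<lambda>x. x - c) ` X" by simp
  ultimately have "c + u \<in> affine hull X" using assms(1) by (auto simp: span_basis)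
  moreover have "c + u \<in> cball c r" using assms(2) by (simp add: dist_norm)
  ultimately show ?thesis using rel_ball_subset by auto
qed

lemma inner_proj_unit:
  assumes "proj g \<noteq> 0"
  shows "inner g (proj g /\<^sub>R norm (proj g)) = norm (proj g)"
proof -
  have "inner g (proj g /\<^sub>R norm (proj g)) = inner (proj g) (proj g /\<^sub>R norm (proj g))"
    by (rule inner_proj[symmetric]) (simp add: proj_in_span span_scale)
  also have "\<dots> = norm (proj g)"
    using assms by (simp add: power2_norm_eq_inner[symmetric] power2_eq_square)
  finally show ?thesis .
qed

end

lemma ex_direction_basis:
  fixes X :: "'a::euclidean_space set"
  assumes "convex X" and "X \<noteq> {}"
  obtains c r B where "direction_basis X c r B"
proof -
  obtain c where "c \<in> rel_interior X"
    using rel_interior_eq_empty[OF assms(1)] assms(2) by auto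
  then obtain r where c: "c \<in> X" "r > 0" "cball c r \<inter> affine hull X \<subseteq> X"
    unfolding mem_rel_interior_cball by auto
  obtain B where B: "pairwise orthogonal B" "\<And>x. x \<in> B \<Longrightarrow> norm x = 1"
      "independent B" "span B = span ((\<lambda>x. x - c) ` X)"
    using orthonormal_basis_subspace[OF subspace_span, of "(\<lambda>x. x - c) ` X"] by metis
  have "finite B" using independent_imp_finite B(3) by blast
  with c B show ?thesis
    by (intro that) (unfold_locales; blast)
qed

definition proj_grad_bound :: "real \<Rightarrow> real \<Rightarrow> real \<Rightarrow> real \<Rightarrow> real" where
  "proj_grad_bound L G M r = (2 * \<bar>L\<bar> * M + \<bar>G\<bar> * M\<^sup>2 / 2) / r"

definition proj_grad_lip :: "real \<Rightarrow> real \<Rightarrow> real \<Rightarrow> real \<Rightarrow> real" where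
  "proj_grad_lip L G M r = \<bar>G\<bar> * (1 + M\<^sup>2 / r\<^sup>2) + 2 * proj_grad_bound L G M r / r"

locale smooth_convex = direction_basis X c r B
  for X :: "'a::euclidean_space set" and c r B +
  fixes f :: "'a \<Rightarrow> real" and g :: "'a \<Rightarrow> 'a" and L G M :: real
  assumes convex_X: "convex X" and convex_f: "convex_on X f"
    and has_grad: "\<And>y. y \<in> X \<Longrightarrow> (f has_derivative (\<lambda>h. inner (g y) h)) (at y within X)"
    and lipschitz: "\<And>y z. y \<in> X \<Longrightarrow> z \<in> X \<Longrightarrow> \<bar>f y - f z\<bar> \<le> L * norm (y - z)"
    and upper_quadratic: "\<And>y z. y \<in> X \<Longrightarrow> z \<in> X \<Longrightarrow>
      f y - f z \<le> inner (g z) (y - z) + G / 2 * (norm (y - z))\<^sup>2"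
    and diameter: "\<And>y z. y \<in> X \<Longrightarrow> z \<in> X \<Longrightarrow> norm (y - z) \<le> M"
begin

lemma diameter_nonneg: "0 \<le> M"
  using diameter[OF centre_in centre_in] by simp

lemma proj_grad_bound_nonneg: "0 \<le> proj_grad_bound L G M r"
  unfolding proj_grad_bound_def using diameter_nonneg radius_pos by simp

lemma proj_grad_lip_nonneg: "0 \<le> proj_grad_lip L G M r"
  unfolding proj_grad_lip_def using proj_grad_bound_nonneg radius_pos by simp

lemma gradient_ineq: "y \<in> X \<Longrightarrow> p \<in> X \<Longrightarrow> f y + inner (g y) (p - y) \<le> f p"
  by (rule convex_on_gradient_ineq[OF convex_f convex_X has_grad])

lemma diff_le_lipschitz: "y \<in> X \<Longrightarrow> z \<in> X \<Longrightarrow> f y - f z \<le> \<bar>L\<bar> * norm (y - z)"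
  using lipschitz[of y z] mult_right_mono[OF abs_ge_self[of L] norm_ge_zero[of "y - z"]] by linarith

lemma diff_le_lipschitz_diameter: "y \<in> X \<Longrightarrow> z \<in> X \<Longrightarrow> f y - f z \<le> \<bar>L\<bar> * M"
  using diff_le_lipschitz[of y z] diameter[of y z] mult_left_mono[of _ M "\<bar>L\<bar>"] by force

lemma inner_grad_diff_toward:
  assumes y: "y \<in> X" and z: "z \<in> X" and p: "p \<in> X" and \<tau>: "0 \<le> \<tau>" "\<tau> \<le> 1"
  shows "\<tau> * inner (g y - g z) (p - z) \<le> \<bar>G\<bar> / 2 * ((norm (y - z))\<^sup>2 + \<tau>\<^sup>2 * M\<^sup>2)"
proof -
  define p' where "p' = (1 - \<tau>) *\<^sub>R z + \<tau> *\<^sub>R p"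
  have p': "p' \<in> X" unfolding p'_def using convex_X z p \<tau> by (simp add: convex_alt)
  have p'z: "p' - z = \<tau> *\<^sub>R (p - z)" by (simp add: p'_def algebra_simps)
  have "f y + inner (g y) (p' - y) \<le> f p'" by (rule gradient_ineq[OF y p'])
  moreover have "f p' - f z \<le> inner (g z) (p' - z) + G / 2 * (norm (p' - z))\<^sup>2"
    by (rule upper_quadratic[OF p' z])
  moreover have "f z - f y \<le> inner (g y) (z - y) + G / 2 * (norm (y - z))\<^sup>2"
    using upper_quadratic[OF z y] by (simp add: norm_minus_commute)
  moreover have "inner (g y) (p' - y) = inner (g y) (p' - z) + inner (g y) (z - y)"
    by (simp add: inner_diff_right)
  ultimately have "inner (g y - g z) (p' - z) \<le> G / 2 * ((norm (y - z))\<^sup>2 + (norm (p' - z))\<^sup>2)"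
    by (simp add: inner_diff_left distrib_left)
  also have "\<dots> \<le> \<bar>G\<bar> / 2 * ((norm (y - z))\<^sup>2 + (norm (p' - z))\<^sup>2)"
    by (intro mult_right_mono) auto
  also have "\<dots> \<le> \<bar>G\<bar> / 2 * ((norm (y - z))\<^sup>2 + \<tau>\<^sup>2 * M\<^sup>2)"
    unfolding p'z using diameter[OF p z] \<tau>
    by (intro mult_left_mono add_left_mono) (simp_all add: power_mult_distrib mult_left_mono power_mono)
  finally show ?thesis by (simp add: p'z)
qed

text \<open>Testing the gradient inequality at \<open>z\<close> against the point \<open>c + r u\<close>, with \<open>u\<close> the unit
  direction of \<open>proj (g z)\<close>.\<close>

lemma norm_proj_grad_le:
  assumes z: "z \<in> X"
  shows "norm (proj (g z)) \<le> proj_grad_bound L G M r"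
proof (cases "proj (g z) = 0")
  case True then show ?thesis using proj_grad_bound_nonneg by simp
next
  case False
  define w where "w = proj (g z)"
  define q where "q = c + r *\<^sub>R (w /\<^sub>R norm w)"
  have q: "q \<in> X"
    unfolding q_def w_def using False radius_pos
    by (intro centre_add_in span_scale proj_in_span) simp
  have "inner (g z) (q - z) \<le> \<bar>L\<bar> * M"
    using gradient_ineq[OF z q] diff_le_lipschitz_diameter[OF q z] by simp
  moreover have "inner (g z) (q - z) = inner (g z) (c - z) + r * norm w"
    using inner_proj_unit[OF False]
    by (simp add: q_def w_def inner_add_right inner_diff_right algebra_simps)
  moreover have "f c - f z \<le> inner (g z) (c - z) + G / 2 * (norm (c - z))\<^sup>2"
    by (rule upper_quadratic[OF centre_in z])
  moreover have "G / 2 * (norm (c - z))\<^sup>2 \<le> \<bar>G\<bar> / 2 * M\<^sup>2"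
    using diameter[OF centre_in z] by (intro mult_mono power_mono) auto
  moreover have "f z - f c \<le> \<bar>L\<bar> * M" by (rule diff_le_lipschitz_diameter[OF z centre_in])
  ultimately have "r * norm w \<le> 2 * \<bar>L\<bar> * M + \<bar>G\<bar> * M\<^sup>2 / 2" by linarith
  then show ?thesis
    unfolding proj_grad_bound_def w_def[symmetric] using radius_pos by (simp add: field_simps)
qed

text \<open>Moving \<open>z\<close> towards \<open>c + u\<close> and \<open>y\<close> towards \<open>c - u\<close> by the same fraction \<open>\<tau>\<close>.\<close>

lemma inner_grad_diff_two_sided:
  assumes y: "y \<in> X" and z: "z \<in> X" and u: "u \<in> span B" "norm u \<le> r"
    and \<tau>: "0 \<le> \<tau>" "\<tau> \<le> 1"
  shows "\<tau> * inner (g y - g z) (2 *\<^sub>R u + (y - z)) \<le> \<bar>G\<bar> * ((norm (y - z))\<^sup>2 + \<tau>\<^sup>2 * M\<^sup>2)"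
proof -
  have q: "c + u \<in> X" by (rule centre_add_in[OF u])
  have q': "c + - u \<in> X" by (rule centre_add_in) (use u in \<open>simp_all add: span_neg\<close>)
  have "2 *\<^sub>R u + (y - z) = (c + u - z) - (c + - u - y)" by (simp add: algebra_simps scaleR_2)
  then have "inner (g y - g z) (2 *\<^sub>R u + (y - z))
      = inner (g y - g z) (c + u - z) + inner (g z - g y) (c + - u - y)"
    by (metis inner_diff_right inner_minus_left minus_diff_eq diff_conv_add_uminus)
  then show ?thesis
    using inner_grad_diff_toward[OF y z q \<tau>] inner_grad_diff_toward[OF z y q' \<tau>]
    by (simp add: distrib_left norm_minus_commute)
qed

text \<open>For nearby points take \<open>u\<close> of length \<open>r\<close> along the projected gradient difference and
  \<open>\<tau> = \<parallel>y - z\<parallel> / r\<close>.\<close>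

lemma norm_proj_grad_diff_le_near:
  assumes y: "y \<in> X" and z: "z \<in> X" and near: "norm (y - z) \<le> r"
  shows "norm (proj (g y) - proj (g z)) \<le> \<bar>G\<bar> * (1 + M\<^sup>2 / r\<^sup>2) * norm (y - z)"
proof (cases "proj (g y - g z) = 0")
  case True then show ?thesis by (simp add: proj_diff)
next
  case False
  define \<delta> W w where "\<delta> = norm (y - z)" and "W = g y - g z" and "w = proj (g y - g z)"
  define \<tau> u where "\<tau> = \<delta> / r" and "u = r *\<^sub>R (w /\<^sub>R norm w)"
  have "y \<noteq> z" using False by (auto simp: proj_def)
  then have \<delta>: "0 < \<delta>" and \<tau>: "0 \<le> \<tau>" "\<tau> \<le> 1"
    using near radius_pos by (auto simp: \<delta>_def \<tau>_def)
  have u: "u \<in> span B" "norm u \<le> r"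
    using False radius_pos by (auto simp: u_def w_def span_scale proj_in_span)
  have "inner W (2 *\<^sub>R u + (y - z)) = 2 * r * norm w + inner w (y - z)"
    using inner_proj_unit[OF False] inner_proj[OF diff_in_span[OF y z], of "g y - g z"]
    by (simp add: u_def w_def W_def inner_add_right)
  moreover have "- (norm w * \<delta>) \<le> inner w (y - z)"
    using Cauchy_Schwarz_ineq2[of w "y - z"] by (simp add: \<delta>_def abs_le_iff)
  moreover have "norm w * \<delta> \<le> r * norm w"
    using near mult_right_mono[of "norm (y - z)" r "norm w"] by (simp add: \<delta>_def mult.commute)
  ultimately have "r * norm w \<le> inner W (2 *\<^sub>R u + (y - z))" by linarith
  then have "\<tau> * (r * norm w) \<le> \<bar>G\<bar> * (\<delta>\<^sup>2 + \<tau>\<^sup>2 * M\<^sup>2)"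
    using inner_grad_diff_two_sided[OF y z u \<tau>] mult_left_mono[OF _ \<tau>(1)]
    unfolding W_def \<delta>_def by (meson order_trans)
  also have "\<tau> * (r * norm w) = \<delta> * norm w" using radius_pos by (simp add: \<tau>_def)
  also have "\<bar>G\<bar> * (\<delta>\<^sup>2 + \<tau>\<^sup>2 * M\<^sup>2) = \<delta> * (\<bar>G\<bar> * (1 + M\<^sup>2 / r\<^sup>2) * \<delta>)"
    by (simp add: \<tau>_def power_divide algebra_simps power2_eq_square)
  finally show ?thesis
    using \<delta> by (simp add: \<delta>_def w_def proj_diff)
qed

lemma norm_proj_grad_diff_le:
  assumes y: "y \<in> X" and z: "z \<in> X"
  shows "norm (proj (g y) - proj (g z)) \<le> proj_grad_lip L G M r * norm (y - z)"
proof (cases "norm (y - z) \<le> r")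
  case True
  have "\<bar>G\<bar> * (1 + M\<^sup>2 / r\<^sup>2) \<le> proj_grad_lip L G M r"
    unfolding proj_grad_lip_def using proj_grad_bound_nonneg radius_pos by simp
  then show ?thesis
    using norm_proj_grad_diff_le_near[OF y z True] by (meson mult_right_mono norm_ge_zero order_trans)
next
  case False
  have "norm (proj (g y) - proj (g z)) \<le> 2 * proj_grad_bound L G M r"
    using norm_triangle_ineq4[of "proj (g y)" "proj (g z)"] norm_proj_grad_le[OF y]
      norm_proj_grad_le[OF z] by simp
  also have "\<dots> \<le> 2 * proj_grad_bound L G M r / r * norm (y - z)"
    using False radius_pos proj_grad_bound_nonneg
    by (simp add: field_simps mult_right_mono)
  also have "\<dots> \<le> proj_grad_lip L G M r * norm (y - z)"
    unfolding proj_grad_lip_def by (intro mult_right_mono) auto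
  finally show ?thesis .
qed

end

section \<open>The DOMFW setting\<close>

locale domfw_setting = direction_basis X c r B
  for X :: "'a::euclidean_space set" and c r B +
  fixes n :: nat
    and E :: "nat \<Rightarrow> (nat \<times> nat) set"
    and A :: "nat \<Rightarrow> nat \<Rightarrow> nat \<Rightarrow> real"
    and f :: "nat \<Rightarrow> nat \<Rightarrow> 'a \<Rightarrow> real"
    and grad :: "nat \<Rightarrow> nat \<Rightarrow> 'a \<Rightarrow> 'a"
    and xstar :: "nat \<Rightarrow> 'a"
    and x1 :: "nat \<Rightarrow> 'a"
    and \<zeta> M L G \<rho> :: real
  assumes n_pos: "1 \<le> n"
    and graph_edges: "\<And>t. t \<ge> 1 \<Longrightarrow> E t \<subseteq> {..<n} \<times> {..<n}"
    and A_support: "\<And>t i j. t \<ge> 1 \<Longrightarrow> i < n \<Longrightarrow> j < n \<Longrightarrow>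
                      A t i j \<ge> 0 \<and> (A t i j > 0 \<longleftrightarrow> ((j, i) \<in> E t \<or> j = i))"
    and A1a: "\<zeta> > 0" "\<And>t i j. t \<ge> 1 \<Longrightarrow> i < n \<Longrightarrow> j < n \<Longrightarrow> A t i j > 0 \<Longrightarrow> A t i j > \<zeta>"
    and A1b: "\<And>t. t \<ge> 1 \<Longrightarrow> strongly_connected n (E t)"
    and A1c: "\<And>t i. t \<ge> 1 \<Longrightarrow> i < n \<Longrightarrow> (\<Sum>j<n. A t i j) = 1"
             "\<And>t j. t \<ge> 1 \<Longrightarrow> j < n \<Longrightarrow> (\<Sum>i<n. A t i j) = 1"
    and A2: "convex X" "\<And>y z. y \<in> X \<Longrightarrow> z \<in> X \<Longrightarrow> norm (y - z) \<le> M"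
    and A3: "\<And>i t y z. i < n \<Longrightarrow> t \<ge> 1 \<Longrightarrow> y \<in> X \<Longrightarrow> z \<in> X \<Longrightarrow>
               \<bar>f i t y - f i t z\<bar> \<le> L * norm (y - z)"
    and A4: "\<And>i t y z. i < n \<Longrightarrow> t \<ge> 1 \<Longrightarrow> y \<in> X \<Longrightarrow> z \<in> X \<Longrightarrow>
               f i t y - f i t z \<le> inner (grad i t z) (y - z) + G / 2 * (norm (y - z))\<^sup>2"
    and convex_f: "\<And>i t. i < n \<Longrightarrow> t \<ge> 1 \<Longrightarrow> convex_on X (f i t)"
    and grad_f: "\<And>i t y. i < n \<Longrightarrow> t \<ge> 1 \<Longrightarrow> y \<in> X \<Longrightarrow>
               (f i t has_derivative (\<lambda>h. inner (grad i t y) h)) (at y within X)"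
    and xstar_min: "\<And>t. t \<ge> 1 \<Longrightarrow> xstar t \<in> X \<and> (\<forall>z\<in>X. Fsum n f t (xstar t) \<le> Fsum n f t z)"
    and init: "\<And>i. i < n \<Longrightarrow> x1 i \<in> X"
    and \<rho>: "\<rho> \<ge> 1"
begin

lemma smooth_convex_f: "i < n \<Longrightarrow> t \<ge> 1 \<Longrightarrow> smooth_convex X c r B (f i t) (grad i t) L G M"
  by unfold_locales (use A2 A3 A4 convex_f grad_f in auto)

abbreviation Bg :: real where "Bg \<equiv> proj_grad_bound L G M r"
abbreviation Lg :: real where "Lg \<equiv> proj_grad_lip L G M r"

lemma diameter_nonneg: "0 \<le> M"
  using A2(2)[OF centre_in centre_in] by simp

lemma Bg_nonneg: "0 \<le> Bg"
  by (rule smooth_convex.proj_grad_bound_nonneg[OF smooth_convex_f[of 0 1]]) (use n_pos in auto)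

lemma Lg_nonneg: "0 \<le> Lg"
  by (rule smooth_convex.proj_grad_lip_nonneg[OF smooth_convex_f[of 0 1]]) (use n_pos in auto)

definition mix :: "nat \<Rightarrow> (nat \<Rightarrow> 'a) \<Rightarrow> nat \<Rightarrow> 'a" where
  "mix t w i = (\<Sum>j<n. A t i j *\<^sub>R w j)"

definition mix_rate :: real where
  "mix_rate = sqrt (1 - \<zeta>\<^sup>2 / (2 * real n ^ 5))"

lemma zeta_lt_1: "\<zeta> < 1"
proof -
  have "\<zeta> < A 1 0 0" using A_support[of 1 0 0] A1a(2)[of 1 0 0] n_pos by auto
  also have "\<dots> \<le> (\<Sum>j<n. A 1 0 j)"
    using n_pos A_support[of 1 0] by (intro member_le_sum) auto
  also have "\<dots> = 1" using A1c(1)[of 1 0] n_pos by simp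
  finally show ?thesis .
qed

lemma mix_rate_bounds: "0 \<le> mix_rate" "mix_rate < 1"
proof -
  have n5: "1 \<le> real n ^ 5" using n_pos by simp
  have "\<zeta>\<^sup>2 < 1" using zeta_lt_1 A1a(1) by (simp add: power_less_one_iff abs_less_iff)
  then have "\<zeta>\<^sup>2 / (2 * real n ^ 5) \<le> 1"
    using n5 by (simp add: divide_le_eq)
  moreover have "0 < \<zeta>\<^sup>2 / (2 * real n ^ 5)"
    using n_pos A1a(1) by (intro divide_pos_pos) auto
  ultimately show "0 \<le> mix_rate" "mix_rate < 1" by (auto simp: mix_rate_def)
qed

lemma dev_mix_le: "t \<ge> 1 \<Longrightarrow> dev n (mix t w) \<le> mix_rate * dev n w"
proof -
  assume t: "t \<ge> 1"
  have "(dev n (mix t w))\<^sup>2 \<le> (1 - \<zeta>\<^sup>2 / (2 * real n ^ 5)) * (dev n w)\<^sup>2"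
    unfolding mix_def
  proof (rule dev_mix_power2_le[where E = "E t"])
    show "\<And>i j. i < n \<Longrightarrow> j < n \<Longrightarrow> (j, i) \<in> E t \<or> j = i \<Longrightarrow> \<zeta> < A t i j"
      using A_support[OF t] A1a(2)[OF t] by blast
  qed (use n_pos graph_edges[OF t] A1b[OF t] A_support[OF t] A1a(1) A1c[OF t] in auto)
  also have "\<dots> = (mix_rate * dev n w)\<^sup>2"
    using mix_rate_bounds unfolding mix_rate_def by (simp add: power_mult_distrib)
  finally show ?thesis
    using mix_rate_bounds by (simp add: power2_le_iff_abs_le)
qed

lemma avg_mix_eq: "t \<ge> 1 \<Longrightarrow> avg n (mix t w) = avg n w"
  unfolding mix_def by (rule avg_mix) (use A1c(2) in auto)

lemma mix_in_X: "t \<ge> 1 \<Longrightarrow> i < n \<Longrightarrow> (\<And>j. j < n \<Longrightarrow> w j \<in> X) \<Longrightarrow> mix t w i \<in> X"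
  unfolding mix_def by (rule convex_sum) (use A2(1) A1c(1) A_support in auto)

lemma proj_mix: "proj (mix t w i) = mix t (\<lambda>j. proj (w j)) i"
  by (simp add: mix_def proj_sum proj_scaleR)

lemma dev_le_sqrt_diameter: "(\<And>i. i < n \<Longrightarrow> w i \<in> X) \<Longrightarrow> dev n w \<le> sqrt (real n) * M"
  by (rule dev_le_diameter[OF _ centre_in A2(2)])

definition variation :: "nat \<Rightarrow> real" where
  "variation t = (MAX i\<in>{..<n}. (SUP y\<in>X. \<bar>f i (Suc t) y - f i t y\<bar>))"

lemma variation_ge:
  assumes i: "i < n" and t: "t \<ge> 1" and y: "y \<in> X"
  shows "\<bar>f i (Suc t) y - f i t y\<bar> \<le> variation t"
proof -
  have "\<bar>f i (Suc t) z - f i t z\<bar> \<le> \<bar>f i (Suc t) c\<bar> + \<bar>f i t c\<bar> + 2 * \<bar>L\<bar> * M" if z: "z \<in> X" for z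
  proof -
    have "\<bar>L\<bar> * norm (z - c) \<le> \<bar>L\<bar> * M" using A2(2)[OF z centre_in] by (simp add: mult_left_mono)
    moreover have "L * norm (z - c) \<le> \<bar>L\<bar> * norm (z - c)" by (simp add: mult_right_mono)
    ultimately show ?thesis
      using A3[OF i _ z centre_in, of "Suc t"] A3[OF i t z centre_in] by linarith
  qed
  then have "bdd_above ((\<lambda>y. \<bar>f i (Suc t) y - f i t y\<bar>) ` X)"
    by (intro bdd_aboveI2)
  then have "\<bar>f i (Suc t) y - f i t y\<bar> \<le> (SUP y\<in>X. \<bar>f i (Suc t) y - f i t y\<bar>)"
    by (rule cSUP_upper[OF y])
  also have "\<dots> \<le> variation t"
    unfolding variation_def using i by (intro Max_ge) auto
  finally show ?thesis .
qed

lemma H_var_eq: "H_var n X f T = (\<Sum>t=1..<T. variation t)"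
  unfolding H_var_def variation_def ..

lemma H_var_nonneg: "0 \<le> H_var n X f T"
  unfolding H_var_eq
  using variation_ge[of 0 _ c] n_pos centre_in by (intro sum_nonneg) (auto intro: order_trans[OF abs_ge_zero])

end

locale domfw_run = domfw_setting X c r B n E A f grad xstar x1 \<zeta> M L G \<rho>
  for X :: "'a::euclidean_space set" and c r B n E A f grad xstar x1 \<zeta> M L G \<rho> +
  fixes T K :: nat and \<alpha> :: real and x :: "nat \<Rightarrow> nat \<Rightarrow> 'a"
    and xk xh gb gh v :: "nat \<Rightarrow> nat \<Rightarrow> nat \<Rightarrow> 'a"
  assumes T_pos: "T \<ge> 1" and K_pos: "K \<ge> 1" and step_size: "\<alpha> = 1 / (\<rho> * real K)"
    and run: "DOMFW n A grad X x1 T (\<lambda>_. K) (\<lambda>_. \<alpha>) x xk xh gb gh v"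
begin

lemma x_first: "i < n \<Longrightarrow> x i 1 = x1 i"
  using run unfolding DOMFW_def by blast

lemma round_ends:
  assumes "i < n" "t \<in> {1..T}"
  shows "xk i t 1 = x i t" and "x i (Suc t) = xk i t (Suc K)"
  using run assms unfolding DOMFW_def by auto

lemma inner_step:
  assumes i: "i < n" and t: "t \<in> {1..T}" and k: "k \<in> {1..K}"
  shows "xh i t k = mix t (\<lambda>j. xk j t k) i"
    and "gb i t k = (if k = 1 then grad i t (xh i t 1)
                     else gh i t (k - 1) + grad i t (xh i t k) - grad i t (xh i t (k - 1)))"
    and "gh i t k = mix t (\<lambda>j. gb j t k) i"
    and "v i t k \<in> X"
    and "z \<in> X \<Longrightarrow> inner (v i t k) (gh i t k) \<le> inner z (gh i t k)"
    and "xk i t (Suc k) = (1 - \<alpha>) *\<^sub>R xh i t k + \<alpha> *\<^sub>R v i t k"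
proof -
  from run i t k have H: "xh i t k = mix t (\<lambda>j. xk j t k) i \<and>
       gb i t k = (if k = 1 then grad i t (xh i t 1)
                   else gh i t (k - 1) + grad i t (xh i t k) - grad i t (xh i t (k - 1))) \<and>
       gh i t k = mix t (\<lambda>j. gb j t k) i \<and>
       v i t k \<in> X \<and> (\<forall>z\<in>X. inner (v i t k) (gh i t k) \<le> inner z (gh i t k)) \<and>
       xk i t (Suc k) = xh i t k + \<alpha> *\<^sub>R (v i t k - xh i t k)"
    unfolding DOMFW_def mix_def by blast
  then show "xh i t k = mix t (\<lambda>j. xk j t k) i"
    and "gb i t k = (if k = 1 then grad i t (xh i t 1)
                     else gh i t (k - 1) + grad i t (xh i t k) - grad i t (xh i t (k - 1)))"
    and "gh i t k = mix t (\<lambda>j. gb j t k) i"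
    and "v i t k \<in> X"
    and "z \<in> X \<Longrightarrow> inner (v i t k) (gh i t k) \<le> inner z (gh i t k)"
    by blast+
  from H have "xk i t (Suc k) = xh i t k + \<alpha> *\<^sub>R (v i t k - xh i t k)" by blast
  then show "xk i t (Suc k) = (1 - \<alpha>) *\<^sub>R xh i t k + \<alpha> *\<^sub>R v i t k"
    by (simp add: algebra_simps)
qed

lemma step_size_pos: "\<alpha> > 0"
  using step_size \<rho> K_pos by simp

lemma step_size_le_1: "\<alpha> \<le> 1"
proof -
  have "1 \<le> \<rho> * real K" using \<rho> K_pos mult_mono[of 1 \<rho> 1 "real K"] by simp
  then show ?thesis using step_size by simp
qed

lemma K_step_size: "real K * \<alpha> = 1 / \<rho>"
  using step_size K_pos by simp

lemma K_step_size_le_1: "real K * \<alpha> \<le> 1"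
  using K_step_size \<rho> by simp

lemma round_in_X:
  assumes t: "t \<in> {1..T}" and xt: "\<And>i. i < n \<Longrightarrow> x i t \<in> X"
  shows "k \<le> K \<Longrightarrow> i < n \<Longrightarrow> xk i t (Suc k) \<in> X"
proof (induction k arbitrary: i)
  case 0 then show ?case using round_ends(1)[OF _ t] xt by simp
next
  case (Suc k)
  have "xh i t (Suc k) \<in> X"
    using inner_step(1)[OF Suc(3) t, of "Suc k"] Suc mix_in_X t by auto
  moreover have "v i t (Suc k) \<in> X" using inner_step(4)[OF Suc(3) t] Suc(2) by simp
  ultimately show ?case
    using inner_step(6)[OF Suc(3) t, of "Suc k"] Suc(2) A2(1) step_size_pos step_size_le_1
    by (simp add: convex_alt)
qed

lemma x_in_X:
  assumes "t \<in> {1..Suc T}" and "i < n"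
  shows "x i t \<in> X"
proof -
  have "t \<le> Suc T \<Longrightarrow> i < n \<Longrightarrow> x i t \<in> X" if "t \<ge> 1" for t i
    using that
  proof (induction t arbitrary: i rule: nat_induct_at_least)
    case base then show ?case using x_first init by simp
  next
    case (Suc t)
    then show ?case using round_in_X[of t K] round_ends(2)[of i t] by simp
  qed
  then show ?thesis using assms by simp
qed

lemma xk_in_X:
  assumes t: "t \<in> {1..T}" and k: "k \<in> {1..Suc K}" and i: "i < n"
  shows "xk i t k \<in> X"
proof -
  have "xk i t (Suc (k - 1)) \<in> X"
    using t k i x_in_X by (intro round_in_X) auto
  then show ?thesis using k by simp
qed

lemma xh_in_X: "t \<in> {1..T} \<Longrightarrow> k \<in> {1..K} \<Longrightarrow> i < n \<Longrightarrow> xh i t k \<in> X"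
  using inner_step(1) mix_in_X xk_in_X by simp

definition ybar :: "nat \<Rightarrow> nat \<Rightarrow> 'a" where "ybar t k = avg n (\<lambda>i. xk i t k)"
definition vbar :: "nat \<Rightarrow> nat \<Rightarrow> 'a" where "vbar t k = avg n (\<lambda>i. v i t k)"
definition dev_x :: "nat \<Rightarrow> nat \<Rightarrow> real" where "dev_x t k = dev n (\<lambda>i. xk i t k)"
definition dev_xh :: "nat \<Rightarrow> nat \<Rightarrow> real" where "dev_xh t k = dev n (\<lambda>i. xh i t k)"
definition dev_g :: "nat \<Rightarrow> nat \<Rightarrow> real" where "dev_g t k = dev n (\<lambda>i. proj (gh i t k))"
definition pgrad :: "nat \<Rightarrow> nat \<Rightarrow> nat \<Rightarrow> 'a" where "pgrad t k i = proj (grad i t (xh i t k))"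
definition gap :: "nat \<Rightarrow> nat \<Rightarrow> real" where
  "gap t k = Fsum n f t (ybar t k) - Fsum n f t (xstar t)"

lemma dev_x_nonneg [simp]: "0 \<le> dev_x t k" and dev_xh_nonneg [simp]: "0 \<le> dev_xh t k"
  and dev_g_nonneg [simp]: "0 \<le> dev_g t k"
  by (simp_all add: dev_x_def dev_xh_def dev_g_def)

lemma ybar_in_X: "t \<in> {1..T} \<Longrightarrow> k \<in> {1..Suc K} \<Longrightarrow> ybar t k \<in> X"
  unfolding ybar_def by (rule avg_in_convex[OF A2(1) n_pos]) (rule xk_in_X)

lemma vbar_in_X: "t \<in> {1..T} \<Longrightarrow> k \<in> {1..K} \<Longrightarrow> vbar t k \<in> X"
  unfolding vbar_def by (rule avg_in_convex[OF A2(1) n_pos]) (use inner_step(4) in simp)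

lemma gap_nonneg: "t \<in> {1..T} \<Longrightarrow> k \<in> {1..Suc K} \<Longrightarrow> 0 \<le> gap t k"
  unfolding gap_def using xstar_min[of t] ybar_in_X[of t k] by auto

lemma avg_xh:
  assumes "t \<in> {1..T}" "k \<in> {1..K}"
  shows "avg n (\<lambda>i. xh i t k) = ybar t k"
proof -
  have "avg n (\<lambda>i. xh i t k) = avg n (mix t (\<lambda>j. xk j t k))"
    using inner_step(1)[OF _ assms] by (intro avg_cong) simp
  then show ?thesis unfolding ybar_def using avg_mix_eq assms by simp
qed

lemma dev_xh_le:
  assumes "t \<in> {1..T}" "k \<in> {1..K}"
  shows "dev_xh t k \<le> mix_rate * dev_x t k"
proof -
  have "dev_xh t k = dev n (mix t (\<lambda>j. xk j t k))"
    unfolding dev_xh_def using inner_step(1)[OF _ assms] by (intro dev_cong) simp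
  then show ?thesis unfolding dev_x_def using dev_mix_le assms by simp
qed

lemma ybar_next:
  assumes "t \<in> {1..T}" "k \<in> {1..K}"
  shows "ybar t (Suc k) = ybar t k + \<alpha> *\<^sub>R (vbar t k - ybar t k)"
proof -
  have "ybar t (Suc k) = avg n (\<lambda>i. (1 - \<alpha>) *\<^sub>R xh i t k + \<alpha> *\<^sub>R v i t k)"
    unfolding ybar_def using inner_step(6)[OF _ assms] by (intro avg_cong) simp
  then show ?thesis
    unfolding avg_lincomb avg_xh[OF assms] vbar_def by (simp add: algebra_simps)
qed

lemma dev_x_next:
  assumes "t \<in> {1..T}" "k \<in> {1..K}"
  shows "dev_x t (Suc k) \<le> mix_rate * dev_x t k + \<alpha> * (sqrt (real n) * M)"
proof -
  have "dev_x t (Suc k) = dev n (\<lambda>i. (1 - \<alpha>) *\<^sub>R xh i t k + \<alpha> *\<^sub>R v i t k)"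
    unfolding dev_x_def using inner_step(6)[OF _ assms] by (intro dev_cong) simp
  also have "\<dots> \<le> \<bar>1 - \<alpha>\<bar> * dev_xh t k + \<bar>\<alpha>\<bar> * dev n (\<lambda>i. v i t k)"
    unfolding dev_xh_def by (rule dev_lincomb)
  also have "\<dots> \<le> 1 * (mix_rate * dev_x t k) + \<alpha> * (sqrt (real n) * M)"
    using dev_xh_le[OF assms] step_size_pos step_size_le_1
      dev_le_sqrt_diameter[of "\<lambda>i. v i t k"] inner_step(4)[OF _ assms]
    by (intro add_mono mult_mono) auto
  finally show ?thesis by simp
qed

lemma dev_x_round_end:
  assumes t: "t \<in> {1..T}"
  shows "dev_x t (Suc K) \<le> mix_rate * dev_x t 1 + \<alpha> * (sqrt (real n) * M) / (1 - mix_rate)"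
proof -
  have "dev_x t (Suc K) \<le> mix_rate ^ K * dev_x t (Suc 0) + \<alpha> * (sqrt (real n) * M) / (1 - mix_rate)"
    using dev_x_next[OF t] mix_rate_bounds step_size_pos diameter_nonneg
    by (intro linear_recursion_le[where a = "\<lambda>k. dev_x t (Suc k)"]) auto
  moreover have "mix_rate ^ K \<le> mix_rate"
    using K_pos mix_rate_bounds power_decreasing[of 1 K mix_rate] by simp
  then have "mix_rate ^ K * dev_x t 1 \<le> mix_rate * dev_x t 1"
    by (simp add: mult_right_mono)
  ultimately show ?thesis by simp
qed

section \<open>Gradient tracking\<close>

lemma proj_gh:
  assumes "i < n" "t \<in> {1..T}" "k \<in> {1..K}"
  shows "proj (gh i t k) = mix t (\<lambda>j. proj (gb j t k)) i"
  using inner_step(3)[OF assms] by (simp add: proj_mix)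

lemma proj_gb_first: "i < n \<Longrightarrow> t \<in> {1..T} \<Longrightarrow> proj (gb i t 1) = pgrad t 1 i"
  using inner_step(2)[of i t 1] K_pos by (simp add: pgrad_def)

lemma proj_gb_next:
  assumes "i < n" "t \<in> {1..T}" "k \<in> {1..K}" "Suc k \<le> K"
  shows "proj (gb i t (Suc k)) = proj (gh i t k) + (pgrad t (Suc k) i - pgrad t k i)"
  using inner_step(2)[of i t "Suc k"] assms by (simp add: pgrad_def proj_add proj_diff)

lemma avg_proj_gh:
  assumes t: "t \<in> {1..T}" and k: "k \<in> {1..K}"
  shows "avg n (\<lambda>i. proj (gh i t k)) = avg n (pgrad t k)"
proof -
  have "k \<le> K \<Longrightarrow> avg n (\<lambda>i. proj (gh i t k)) = avg n (pgrad t k)" if "1 \<le> k" for k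
    using that
  proof (induction k rule: nat_induct_at_least)
    case base
    have "avg n (\<lambda>i. proj (gh i t 1)) = avg n (mix t (\<lambda>j. proj (gb j t 1)))"
      using proj_gh[OF _ t] base by (intro avg_cong) simp
    also have "\<dots> = avg n (\<lambda>j. proj (gb j t 1))"
      using avg_mix_eq t by simp
    also have "\<dots> = avg n (pgrad t 1)"
      using proj_gb_first[OF _ t] by (intro avg_cong) simp
    finally show ?case .
  next
    case (Suc k)
    have "avg n (\<lambda>i. proj (gh i t (Suc k))) = avg n (mix t (\<lambda>j. proj (gb j t (Suc k))))"
      using proj_gh[OF _ t] Suc by (intro avg_cong) simp
    also have "\<dots> = avg n (\<lambda>j. proj (gb j t (Suc k)))"
      using avg_mix_eq t by simp
    also have "\<dots> = avg n (\<lambda>j. proj (gh j t k) + (pgrad t (Suc k) j - pgrad t k j))"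
      using proj_gb_next[OF _ t] Suc by (intro avg_cong) simp
    also have "\<dots> = avg n (pgrad t (Suc k))"
      using Suc by (simp add: avg_add avg_diff)
    finally show ?case .
  qed
  then show ?thesis using k by simp
qed

lemma dev_g_first:
  assumes t: "t \<in> {1..T}"
  shows "dev_g t 1 \<le> sqrt (real n) * Bg"
proof -
  have "dev_g t 1 = dev n (mix t (\<lambda>j. proj (gb j t 1)))"
    unfolding dev_g_def using proj_gh[OF _ t] K_pos by (intro dev_cong) simp
  also have "\<dots> \<le> mix_rate * dev n (\<lambda>j. proj (gb j t 1))"
    using dev_mix_le t by simp
  also have "\<dots> \<le> dev n (\<lambda>j. proj (gb j t 1))"
    using mix_rate_bounds by (simp add: mult_left_le_one_le)
  also have "\<dots> = dev n (pgrad t 1)"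
    using proj_gb_first[OF _ t] by (intro dev_cong) simp
  also have "\<dots> \<le> l2 n (\<lambda>i. pgrad t 1 i - 0)" by (rule dev_le_l2_diff)
  also have "\<dots> \<le> sqrt (real n) * Bg"
    using smooth_convex.norm_proj_grad_le[OF smooth_convex_f] xh_in_X t K_pos Bg_nonneg
    by (intro l2_le_const) (auto simp: pgrad_def)
  finally show ?thesis .
qed

lemma l2_xh_diff_le:
  assumes t: "t \<in> {1..T}" and k: "k \<in> {1..K}" "Suc k \<le> K"
  shows "l2 n (\<lambda>j. xh j t (Suc k) - xh j t k)
    \<le> dev_xh t (Suc k) + dev_xh t k + sqrt (real n) * (\<alpha> * M)"
proof -
  let ?P = "\<lambda>j. xh j t (Suc k) - ybar t (Suc k)" and ?R = "\<lambda>j. xh j t k - ybar t k"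
  let ?Q = "ybar t (Suc k) - ybar t k"
  have "(\<lambda>j. xh j t (Suc k) - xh j t k) = (\<lambda>j. ?P j + (?Q - ?R j))"
    by (simp add: fun_eq_iff algebra_simps)
  then have "l2 n (\<lambda>j. xh j t (Suc k) - xh j t k) \<le> l2 n ?P + (l2 n (\<lambda>j. ?Q) + l2 n ?R)"
    using l2_triangle[of n ?P "\<lambda>j. ?Q - ?R j"] l2_diff[of n "\<lambda>j. ?Q" ?R] by simp
  moreover have "l2 n ?P = dev_xh t (Suc k)" "l2 n ?R = dev_xh t k"
    using avg_xh[OF t k(1)] avg_xh[OF t, of "Suc k"] k by (simp_all add: dev_xh_def dev_def)
  moreover have "l2 n (\<lambda>j. ?Q) \<le> sqrt (real n) * (\<alpha> * M)"
    using ybar_next[OF t k(1)] step_size_pos A2(2)[OF vbar_in_X[OF t k(1)] ybar_in_X[of t k]] t k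
      diameter_nonneg
    by (intro l2_le_const) (simp_all add: mult_left_mono)
  ultimately show ?thesis by simp
qed

lemma l2_pgrad_diff_le:
  assumes t: "t \<in> {1..T}" and k: "k \<in> {1..K}" "Suc k \<le> K"
  shows "l2 n (\<lambda>j. pgrad t (Suc k) j - pgrad t k j)
    \<le> Lg * (dev_xh t (Suc k) + dev_xh t k + sqrt (real n) * (\<alpha> * M))"
proof -
  have "l2 n (\<lambda>j. pgrad t (Suc k) j - pgrad t k j) \<le> l2 n (\<lambda>j. Lg *\<^sub>R (xh j t (Suc k) - xh j t k))"
    using smooth_convex.norm_proj_grad_diff_le[OF smooth_convex_f] xh_in_X t k Lg_nonneg
    by (intro l2_mono) (simp add: pgrad_def)
  also have "\<dots> = Lg * l2 n (\<lambda>j. xh j t (Suc k) - xh j t k)"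
    using Lg_nonneg by (simp add: l2_scaleR)
  also have "\<dots> \<le> Lg * (dev_xh t (Suc k) + dev_xh t k + sqrt (real n) * (\<alpha> * M))"
    using l2_xh_diff_le[OF assms] Lg_nonneg by (rule mult_left_mono)
  finally show ?thesis .
qed

lemma dev_g_next:
  assumes t: "t \<in> {1..T}" and k: "k \<in> {1..K}" "Suc k \<le> K"
  shows "dev_g t (Suc k)
    \<le> mix_rate * (dev_g t k + Lg * (dev_xh t (Suc k) + dev_xh t k + sqrt (real n) * (\<alpha> * M)))"
proof -
  have "dev_g t (Suc k) = dev n (mix t (\<lambda>j. proj (gb j t (Suc k))))"
    unfolding dev_g_def using proj_gh[OF _ t] k by (intro dev_cong) simp
  also have "\<dots> \<le> mix_rate * dev n (\<lambda>j. proj (gb j t (Suc k)))"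
    using dev_mix_le t by simp
  also have "\<dots> = mix_rate * dev n (\<lambda>j. proj (gh j t k) + (pgrad t (Suc k) j - pgrad t k j))"
    using proj_gb_next[OF _ t k] by (simp cong: dev_cong)
  also have "\<dots> \<le> mix_rate * (dev_g t k + l2 n (\<lambda>j. pgrad t (Suc k) j - pgrad t k j))"
    using mix_rate_bounds dev_le_l2_diff[of n _ 0]
    by (intro mult_left_mono order_trans[OF dev_add]) (simp_all add: dev_g_def)
  also have "\<dots> \<le> mix_rate * (dev_g t k + Lg * (dev_xh t (Suc k) + dev_xh t k + sqrt (real n) * (\<alpha> * M)))"
    using l2_pgrad_diff_le[OF t k] mix_rate_bounds by (simp add: mult_left_mono)
  finally show ?thesis .
qed

end

section \<open>The optimality gap of the average\<close>

context domfw_setting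
begin

definition grad_F :: "nat \<Rightarrow> 'a \<Rightarrow> 'a" where
  "grad_F t y = (\<Sum>i<n. grad i t y)"

definition gap_rate :: real where
  "gap_rate = exp (- 1 / \<rho>)"

lemma gap_rate_bounds: "0 \<le> gap_rate" "gap_rate < 1"
  unfolding gap_rate_def using \<rho> by simp_all

end

context domfw_run
begin

lemma Fsum_ybar_next:
  assumes t: "t \<in> {1..T}" and k: "k \<in> {1..K}"
  shows "Fsum n f t (ybar t (Suc k)) - Fsum n f t (ybar t k)
    \<le> \<alpha> * inner (grad_F t (ybar t k)) (vbar t k - ybar t k) + real n * \<bar>G\<bar> * \<alpha>\<^sup>2 * M\<^sup>2 / 2"
proof -
  let ?y0 = "ybar t k" and ?y1 = "ybar t (Suc k)"
  have y0: "?y0 \<in> X" and y1: "?y1 \<in> X" using ybar_in_X t k by auto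
  have "norm (?y1 - ?y0) \<le> \<alpha> * M"
    using ybar_next[OF t k] step_size_pos A2(2)[OF vbar_in_X[OF t k] y0] by (simp add: mult_left_mono)
  then have "G / 2 * (norm (?y1 - ?y0))\<^sup>2 \<le> \<bar>G\<bar> / 2 * (\<alpha> * M)\<^sup>2"
    by (intro mult_mono power_mono) auto
  then have "f i t ?y1 - f i t ?y0 \<le> inner (grad i t ?y0) (?y1 - ?y0) + \<bar>G\<bar> / 2 * (\<alpha> * M)\<^sup>2"
    if "i < n" for i
    using A4[OF that _ y1 y0] t by fastforce
  then have "(\<Sum>i<n. f i t ?y1 - f i t ?y0)
      \<le> (\<Sum>i<n. inner (grad i t ?y0) (?y1 - ?y0) + \<bar>G\<bar> / 2 * (\<alpha> * M)\<^sup>2)"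
    by (intro sum_mono) simp
  then show ?thesis
    using ybar_next[OF t k]
    by (simp add: Fsum_def grad_F_def sum_subtractf sum.distrib inner_sum_left power_mult_distrib
        sum_distrib_left mult.assoc)
qed

lemma inner_grad_F_xstar_le:
  assumes t: "t \<in> {1..T}" and k: "k \<in> {1..Suc K}"
  shows "inner (grad_F t (ybar t k)) (xstar t - ybar t k) \<le> - gap t k"
proof -
  have "inner (grad_F t (ybar t k)) (xstar t - ybar t k)
      = (\<Sum>i<n. inner (grad i t (ybar t k)) (xstar t - ybar t k))"
    by (simp add: grad_F_def inner_sum_left)
  also have "\<dots> \<le> (\<Sum>i<n. f i t (xstar t) - f i t (ybar t k))"
    using smooth_convex.gradient_ineq[OF smooth_convex_f] ybar_in_X[OF t k] xstar_min t
    by (intro sum_mono) (simp add: algebra_simps)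
  also have "\<dots> = - gap t k" by (simp add: gap_def Fsum_def sum_subtractf)
  finally show ?thesis .
qed

lemma norm_sum_pgrad_diff_le:
  assumes t: "t \<in> {1..T}" and k: "k \<in> {1..K}"
  shows "norm ((\<Sum>i<n. pgrad t k i) - proj (grad_F t (ybar t k))) \<le> Lg * (sqrt (real n) * dev_xh t k)"
proof -
  have "norm ((\<Sum>i<n. pgrad t k i) - proj (grad_F t (ybar t k)))
      \<le> (\<Sum>i<n. norm (pgrad t k i - proj (grad i t (ybar t k))))"
    by (simp add: grad_F_def proj_sum flip: sum_subtractf) (rule norm_sum)
  also have "\<dots> \<le> (\<Sum>i<n. Lg * norm (xh i t k - ybar t k))"
    using smooth_convex.norm_proj_grad_diff_le[OF smooth_convex_f] t k xh_in_X ybar_in_X[of t k]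
    by (intro sum_mono) (simp add: pgrad_def)
  also have "\<dots> \<le> Lg * (sqrt (real n) * dev_xh t k)"
    using sum_norm_le_l2[of "\<lambda>i. xh i t k - ybar t k" n] avg_xh[OF t k] Lg_nonneg
    by (simp add: dev_xh_def dev_def sum_distrib_left[symmetric] mult_left_mono)
  finally show ?thesis .
qed

text \<open>Only projected gradients enter, because \<open>v j t k - xstar t\<close> is a direction of \<open>X\<close>.\<close>

lemma inner_grad_F_v_le:
  assumes j: "j < n" and t: "t \<in> {1..T}" and k: "k \<in> {1..K}"
  shows "inner (grad_F t (ybar t k)) (v j t k - ybar t k)
    \<le> inner (grad_F t (ybar t k)) (xstar t - ybar t k)
       + M * (real n * norm (proj (gh j t k) - avg n (\<lambda>i. proj (gh i t k)))
              + Lg * (sqrt (real n) * dev_xh t k))"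
proof -
  let ?S = "grad_F t (ybar t k)" and ?g = "gh j t k" and ?d = "v j t k - xstar t"
  have xs: "xstar t \<in> X" using xstar_min t by simp
  have vX: "v j t k \<in> X" using inner_step(4)[OF j t k] .
  have nS: "real n *\<^sub>R avg n (\<lambda>i. proj (gh i t k)) = (\<Sum>i<n. pgrad t k i)"
    using avg_proj_gh[OF t k] n_pos by (simp add: avg_def)
  have "inner (?S - real n *\<^sub>R ?g) ?d = inner (proj ?S - real n *\<^sub>R proj ?g) ?d"
    using inner_proj[OF diff_in_span[OF vX xs], of "?S - real n *\<^sub>R ?g"]
    by (simp add: proj_diff proj_scaleR)
  also have "\<dots> \<le> norm (proj ?S - real n *\<^sub>R proj ?g) * M"
    using Cauchy_Schwarz_ineq2[of _ ?d] A2(2)[OF vX xs]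
    by (meson abs_le_D1 mult_left_mono norm_ge_zero order_trans)
  also have "norm (proj ?S - real n *\<^sub>R proj ?g)
      \<le> real n * norm (proj ?g - avg n (\<lambda>i. proj (gh i t k))) + Lg * (sqrt (real n) * dev_xh t k)"
  proof -
    have "proj ?S - real n *\<^sub>R proj ?g
        = - (real n *\<^sub>R (proj ?g - avg n (\<lambda>i. proj (gh i t k)))) - ((\<Sum>i<n. pgrad t k i) - proj ?S)"
      using nS by (simp add: algebra_simps)
    then have "norm (proj ?S - real n *\<^sub>R proj ?g)
        \<le> norm (real n *\<^sub>R (proj ?g - avg n (\<lambda>i. proj (gh i t k))))
           + norm ((\<Sum>i<n. pgrad t k i) - proj ?S)"
      by (metis norm_minus_cancel norm_triangle_ineq4)
    then show ?thesis using norm_sum_pgrad_diff_le[OF t k] by simp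
  qed
  finally have "inner (?S - real n *\<^sub>R ?g) ?d
      \<le> M * (real n * norm (proj ?g - avg n (\<lambda>i. proj (gh i t k))) + Lg * (sqrt (real n) * dev_xh t k))"
    using diameter_nonneg by (simp add: mult_right_mono mult.commute)
  moreover have "real n * inner ?g ?d \<le> 0"
    using inner_step(5)[OF j t k xs] by (simp add: mult_nonneg_nonpos inner_diff_right inner_commute)
  ultimately show ?thesis
    by (simp add: inner_diff_left inner_diff_right algebra_simps)
qed

lemma inner_grad_F_vbar_le:
  assumes t: "t \<in> {1..T}" and k: "k \<in> {1..K}"
  shows "inner (grad_F t (ybar t k)) (vbar t k - ybar t k)
    \<le> - gap t k + M * sqrt (real n) * (dev_g t k + Lg * dev_xh t k)"
proof -
  let ?S = "grad_F t (ybar t k)" and ?m = "avg n (\<lambda>i. proj (gh i t k))"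
  have "vbar t k - ybar t k = avg n (\<lambda>j. v j t k - ybar t k)"
    unfolding vbar_def avg_diff avg_const[OF n_pos] ..
  then have "inner ?S (vbar t k - ybar t k) = (1 / real n) * (\<Sum>j<n. inner ?S (v j t k - ybar t k))"
    by (simp add: avg_def inner_sum_right)
  also have "\<dots> \<le> (1 / real n) * (\<Sum>j<n. inner ?S (xstar t - ybar t k)
      + M * (real n * norm (proj (gh j t k) - ?m) + Lg * (sqrt (real n) * dev_xh t k)))"
    using inner_grad_F_v_le[OF _ t k] by (intro mult_left_mono sum_mono) auto
  also have "\<dots> = inner ?S (xstar t - ybar t k) + M * (\<Sum>j<n. norm (proj (gh j t k) - ?m))
      + M * Lg * sqrt (real n) * dev_xh t k"
    using n_pos by (simp add: sum.distrib sum_distrib_left[symmetric] field_simps)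
  also have "\<dots> \<le> - gap t k + M * (sqrt (real n) * dev_g t k) + M * Lg * sqrt (real n) * dev_xh t k"
    using inner_grad_F_xstar_le[OF t] k sum_norm_le_l2[of "\<lambda>j. proj (gh j t k) - ?m" n]
      diameter_nonneg Lg_nonneg
    by (intro add_mono mult_left_mono) (auto simp: dev_g_def dev_def)
  finally show ?thesis by (simp add: algebra_simps)
qed

definition gap_err :: "nat \<Rightarrow> nat \<Rightarrow> real" where
  "gap_err t k = \<alpha> * (M * sqrt (real n) * (dev_g t k + Lg * dev_xh t k))
    + real n * \<bar>G\<bar> * \<alpha>\<^sup>2 * M\<^sup>2 / 2"

lemma gap_err_nonneg: "0 \<le> gap_err t k"
  unfolding gap_err_def using step_size_pos diameter_nonneg Lg_nonneg by simp

lemma gap_next: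
  assumes t: "t \<in> {1..T}" and k: "k \<in> {1..K}"
  shows "gap t (Suc k) \<le> (1 - \<alpha>) * gap t k + gap_err t k"
proof -
  have "gap t (Suc k) = gap t k + (Fsum n f t (ybar t (Suc k)) - Fsum n f t (ybar t k))"
    by (simp add: gap_def)
  also have "\<dots> \<le> gap t k + \<alpha> * (- gap t k + M * sqrt (real n) * (dev_g t k + Lg * dev_xh t k))
      + real n * \<bar>G\<bar> * \<alpha>\<^sup>2 * M\<^sup>2 / 2"
    using Fsum_ybar_next[OF t k]
      mult_left_mono[OF inner_grad_F_vbar_le[OF t k] less_imp_le[OF step_size_pos]]
    by linarith
  finally show ?thesis by (simp add: gap_err_def algebra_simps)
qed

lemma gap_round_end:
  assumes t: "t \<in> {1..T}"
  shows "gap t (Suc K) \<le> gap_rate * gap t 1 + (\<Sum>k<K. gap_err t (Suc k))"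
proof -
  have "gap t (Suc K) \<le> (1 - \<alpha>) ^ K * gap t (Suc 0) + (\<Sum>k<K. gap_err t (Suc k))"
    using gap_next[OF t] step_size_pos step_size_le_1 gap_err_nonneg
    by (intro recursion_le_sum[where a = "\<lambda>k. gap t (Suc k)"]) auto
  moreover have "(1 - \<alpha>) ^ K \<le> exp (- \<alpha>) ^ K"
    using exp_ge_add_one_self[of "- \<alpha>"] step_size_le_1 by (intro power_mono) auto
  moreover have "exp (- \<alpha>) ^ K = gap_rate"
    using K_step_size by (simp add: gap_rate_def flip: exp_of_nat_mult)
  ultimately have "(1 - \<alpha>) ^ K * gap t 1 \<le> gap_rate * gap t 1"
    using gap_nonneg[OF t, of 1] by (intro mult_right_mono) auto
  then show ?thesis using \<open>gap t (Suc K) \<le> _\<close> by simp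
qed

lemma gap_next_round:
  assumes t: "t \<in> {1..T}" "Suc t \<le> T"
  shows "gap (Suc t) 1 \<le> gap t (Suc K) + 2 * real n * variation t"
proof -
  have ybar_eq: "ybar (Suc t) 1 = ybar t (Suc K)"
    unfolding ybar_def using round_ends t by (intro avg_cong) simp
  have y: "ybar t (Suc K) \<in> X" using ybar_in_X t by simp
  have xs: "xstar (Suc t) \<in> X" using xstar_min[of "Suc t"] by simp
  have "Fsum n f (Suc t) z - Fsum n f t z \<le> real n * variation t"
    and "Fsum n f t z - Fsum n f (Suc t) z \<le> real n * variation t" if "z \<in> X" for z
    using sum_mono[of "{..<n}" "\<lambda>i. f i (Suc t) z - f i t z" "\<lambda>_. variation t"]
      sum_mono[of "{..<n}" "\<lambda>i. f i t z - f i (Suc t) z" "\<lambda>_. variation t"]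
      variation_ge[OF _ _ that, of _ t] t
    by (auto simp: Fsum_def sum_subtractf abs_le_iff)
  moreover have "Fsum n f t (xstar t) \<le> Fsum n f t (xstar (Suc t))"
    using xstar_min[of t] xs t by simp
  ultimately show ?thesis
    unfolding gap_def ybar_eq using y xs by fastforce
qed

end

section \<open>Summation over rounds\<close>

context domfw_setting
begin

text \<open>Coefficients of \<open>1 + T \<alpha>\<close> in the bounds on the summed round-start consensus errors,
  the (\<open>\<alpha>\<close>-weighted) summed consensus and tracking errors, and the summed gap errors.\<close>

definition consensus_bound :: real where
  "consensus_bound = sqrt (real n) * M / (1 - mix_rate)\<^sup>2"

definition inner_consensus_bound :: real where
  "inner_consensus_bound = 2 * consensus_bound / (1 - mix_rate)"

definition tracking_bound :: real where
  "tracking_bound = (sqrt (real n) * Bg + 3 * Lg * inner_consensus_bound) / (1 - mix_rate)"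

definition gap_err_bound :: real where
  "gap_err_bound = M * sqrt (real n) * (tracking_bound + Lg * inner_consensus_bound) + real n * \<bar>G\<bar> * M\<^sup>2 / 2"

definition regret_const :: real where
  "regret_const = (real n * \<bar>L\<bar> * M + gap_err_bound + 2 * real n) / (1 - gap_rate)
                  + real n * \<bar>L\<bar> * consensus_bound"

lemma bound_const_ineqs:
  shows consensus_bound_ge: "sqrt (real n) * M \<le> consensus_bound"
    and inner_consensus_bound_ge: "consensus_bound \<le> inner_consensus_bound"
    and consensus_bound_nonneg: "0 \<le> consensus_bound" and inner_consensus_bound_nonneg: "0 \<le> inner_consensus_bound"
    and tracking_bound_nonneg: "0 \<le> tracking_bound" and gap_err_bound_nonneg: "0 \<le> gap_err_bound"
    and regret_const_nonneg: "0 \<le> regret_const"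
proof -
  have \<omega>: "0 < 1 - mix_rate" "1 - mix_rate \<le> 1" using mix_rate_bounds by auto
  have sM: "0 \<le> sqrt (real n) * M" using diameter_nonneg by simp
  show cb: "sqrt (real n) * M \<le> consensus_bound"
  proof -
    have "(1 - mix_rate)\<^sup>2 \<le> 1" using \<omega> by (simp add: power_le_one)
    then have "sqrt (real n) * M * (1 - mix_rate)\<^sup>2 \<le> sqrt (real n) * M"
      using sM by (simp add: mult_left_le)
    then show ?thesis unfolding consensus_bound_def using \<omega> by (simp add: le_divide_eq)
  qed
  show icb: "consensus_bound \<le> inner_consensus_bound"
  proof -
    have "consensus_bound * (1 - mix_rate) \<le> 2 * consensus_bound"
      using \<omega> cb sM mult_left_le[of "1 - mix_rate" consensus_bound] by linarith
    then show ?thesis unfolding inner_consensus_bound_def using \<omega> by (simp add: le_divide_eq)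
  qed
  show cb0: "0 \<le> consensus_bound" and icb0: "0 \<le> inner_consensus_bound" using cb icb sM by linarith+
  show "0 \<le> tracking_bound"
    unfolding tracking_bound_def using \<omega> icb0 Bg_nonneg Lg_nonneg by simp
  then show "0 \<le> gap_err_bound"
    unfolding gap_err_bound_def using icb0 Lg_nonneg diameter_nonneg by simp
  then show "0 \<le> regret_const"
    unfolding regret_const_def using cb0 gap_rate_bounds diameter_nonneg
    by (intro add_nonneg_nonneg divide_nonneg_pos mult_nonneg_nonneg) auto
qed

end

context domfw_run
begin

lemma H_var_eq_shift: "H_var n X f T = (\<Sum>t<T - 1. variation (Suc t))"
proof -
  have "{1..<T} = {Suc 0..<Suc (T - 1)}" using T_pos by simp
  then show ?thesis
    unfolding H_var_eq by (simp only: sum.atLeast_Suc_lessThan_Suc_shift) (simp add: atLeast0LessThan)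
qed

lemma sum_dev_x_round_start:
  "(1 - mix_rate) * (\<Sum>t<T. dev_x (Suc t) 1)
    \<le> sqrt (real n) * M + real T * (\<alpha> * (sqrt (real n) * M) / (1 - mix_rate))"
proof -
  have "(1 - mix_rate) * (\<Sum>t<T. dev_x (Suc t) 1)
      \<le> dev_x (Suc 0) 1 + (\<Sum>t<T - 1. \<alpha> * (sqrt (real n) * M) / (1 - mix_rate))"
  proof (rule linear_recursion_sum_le[where a = "\<lambda>t. dev_x (Suc t) 1"])
    fix t assume "Suc t < T"
    then show "dev_x (Suc (Suc t)) 1 \<le> mix_rate * dev_x (Suc t) 1 + \<alpha> * (sqrt (real n) * M) / (1 - mix_rate)"
      using dev_x_round_end[of "Suc t"] round_ends by (simp add: dev_x_def cong: dev_cong)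
  qed (use mix_rate_bounds T_pos in auto)
  moreover have "dev_x (Suc 0) 1 \<le> sqrt (real n) * M"
    unfolding dev_x_def using xk_in_X T_pos by (intro dev_le_sqrt_diameter) simp
  moreover have "(\<Sum>t<T - 1. \<alpha> * (sqrt (real n) * M) / (1 - mix_rate))
      \<le> real T * (\<alpha> * (sqrt (real n) * M) / (1 - mix_rate))"
    using step_size_pos diameter_nonneg mix_rate_bounds by (simp add: mult_right_mono del: times_divide_eq_right)
  ultimately show ?thesis by linarith
qed

lemma sum_dev_x_inner:
  assumes t: "t \<in> {1..T}"
  shows "(1 - mix_rate) * (\<Sum>k<K. dev_x t (Suc k)) \<le> dev_x t 1 + real K * (\<alpha> * (sqrt (real n) * M))"
proof -
  have "(1 - mix_rate) * (\<Sum>k<K. dev_x t (Suc k))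
      \<le> dev_x t (Suc 0) + (\<Sum>k<K - 1. \<alpha> * (sqrt (real n) * M))"
    using dev_x_next[OF t] mix_rate_bounds K_pos
    by (intro linear_recursion_sum_le[where a = "\<lambda>k. dev_x t (Suc k)"]) auto
  also have "(\<Sum>k<K - 1. \<alpha> * (sqrt (real n) * M)) \<le> real K * (\<alpha> * (sqrt (real n) * M))"
    using step_size_pos diameter_nonneg by (simp add: mult_right_mono)
  finally show ?thesis by simp
qed

lemma sum_dev_g_inner:
  assumes t: "t \<in> {1..T}"
  shows "(1 - mix_rate) * (\<Sum>k<K. dev_g t (Suc k))
    \<le> sqrt (real n) * Bg + Lg * (2 * (\<Sum>k<K. dev_xh t (Suc k)) + real K * (sqrt (real n) * (\<alpha> * M)))"
proof -
  let ?u = "\<lambda>k. Lg * (dev_xh t (Suc (Suc k)) + dev_xh t (Suc k) + sqrt (real n) * (\<alpha> * M))"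
  have "(1 - mix_rate) * (\<Sum>k<K. dev_g t (Suc k)) \<le> dev_g t (Suc 0) + (\<Sum>k<K - 1. ?u k)"
  proof (rule linear_recursion_sum_le[where a = "\<lambda>k. dev_g t (Suc k)"])
    fix k assume "Suc k < K"
    then have "dev_g t (Suc (Suc k)) \<le> mix_rate * (dev_g t (Suc k) + ?u k)"
      using dev_g_next[OF t, of "Suc k"] by simp
    moreover have "mix_rate * ?u k \<le> ?u k"
      using mix_rate_bounds Lg_nonneg step_size_pos diameter_nonneg
      by (intro mult_left_le_one_le) auto
    ultimately show "dev_g t (Suc (Suc k)) \<le> mix_rate * dev_g t (Suc k) + ?u k"
      by (simp add: distrib_left)
  qed (use mix_rate_bounds K_pos in auto)
  also have "(\<Sum>k<K - 1. ?u k)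
      = Lg * ((\<Sum>k<K - 1. dev_xh t (Suc (Suc k))) + (\<Sum>k<K - 1. dev_xh t (Suc k))
              + (\<Sum>k<K - 1. sqrt (real n) * (\<alpha> * M)))"
    by (simp only: sum.distrib sum_distrib_left[symmetric])
  also have "\<dots> \<le> Lg * (2 * (\<Sum>k<K. dev_xh t (Suc k)) + real K * (sqrt (real n) * (\<alpha> * M)))"
    using sum_lessThan_pred_le[of "\<lambda>k. dev_xh t (Suc k)" K] Lg_nonneg step_size_pos diameter_nonneg
    by (intro mult_left_mono) (auto intro!: add_mono mult_right_mono)
  finally show ?thesis
    using dev_g_first[OF t] by simp
qed

lemma gap_first: "gap 1 1 \<le> real n * \<bar>L\<bar> * M"
proof -
  have y: "ybar 1 1 \<in> X" and xs: "xstar 1 \<in> X"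
    using ybar_in_X[of 1 1] T_pos xstar_min[of 1] by auto
  have "gap 1 1 = (\<Sum>i<n. f i 1 (ybar 1 1) - f i 1 (xstar 1))"
    by (simp add: gap_def Fsum_def sum_subtractf)
  also have "\<dots> \<le> (\<Sum>i<n. \<bar>L\<bar> * M)"
    by (intro sum_mono smooth_convex.diff_le_lipschitz_diameter[OF smooth_convex_f]) (use y xs in auto)
  finally show ?thesis by simp
qed

lemma sum_gap_round_start:
  "(1 - gap_rate) * (\<Sum>t<T. gap (Suc t) 1)
    \<le> real n * \<bar>L\<bar> * M + (\<Sum>t<T. \<Sum>k<K. gap_err (Suc t) (Suc k)) + 2 * real n * H_var n X f T"
proof -
  let ?u = "\<lambda>t. (\<Sum>k<K. gap_err (Suc t) (Suc k)) + 2 * real n * variation (Suc t)"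
  have "(1 - gap_rate) * (\<Sum>t<T. gap (Suc t) 1) \<le> gap (Suc 0) 1 + (\<Sum>t<T - 1. ?u t)"
  proof (rule linear_recursion_sum_le[where a = "\<lambda>t. gap (Suc t) 1"])
    fix t assume "Suc t < T"
    then show "gap (Suc (Suc t)) 1 \<le> gap_rate * gap (Suc t) 1 + ?u t"
      using gap_next_round[of "Suc t"] gap_round_end[of "Suc t"] by simp
  qed (use gap_nonneg gap_rate_bounds T_pos K_pos in auto)
  also have "(\<Sum>t<T - 1. ?u t)
      \<le> (\<Sum>t<T. \<Sum>k<K. gap_err (Suc t) (Suc k)) + 2 * real n * H_var n X f T"
    using sum_lessThan_pred_le(1)[of "\<lambda>t. \<Sum>k<K. gap_err (Suc t) (Suc k)" T] gap_err_nonneg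
    by (simp add: sum.distrib H_var_eq_shift sum_distrib_left sum_nonneg)
  finally show ?thesis using gap_first by simp
qed

lemma Fsum_x_le:
  assumes j: "j < n" and t: "t \<in> {1..T}"
  shows "Fsum n f t (x j t) - Fsum n f t (xstar t) \<le> gap t 1 + real n * \<bar>L\<bar> * dev_x t 1"
proof -
  have x: "x j t \<in> X" and y: "ybar t 1 \<in> X" using x_in_X ybar_in_X j t by auto
  have "norm (x j t - ybar t 1) \<le> dev_x t 1"
    using norm_diff_avg_le_dev[OF j, of "\<lambda>i. xk i t 1"] round_ends(1)[OF j t]
    by (simp add: ybar_def dev_x_def)
  then have "f i t (x j t) - f i t (ybar t 1) \<le> \<bar>L\<bar> * dev_x t 1" if "i < n" for i
    using smooth_convex.diff_le_lipschitz[OF smooth_convex_f[OF that] x y] t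
      mult_left_mono[of _ "dev_x t 1" "\<bar>L\<bar>"] by force
  then have "(\<Sum>i<n. f i t (x j t) - f i t (ybar t 1)) \<le> (\<Sum>i<n. \<bar>L\<bar> * dev_x t 1)"
    by (intro sum_mono) simp
  then have "Fsum n f t (x j t) - Fsum n f t (ybar t 1) \<le> real n * \<bar>L\<bar> * dev_x t 1"
    by (simp add: Fsum_def sum_subtractf)
  then show ?thesis by (simp add: gap_def)
qed

lemma regret_le_sum_gap:
  assumes j: "j < n"
  shows "regret_d n f x xstar j T \<le> (\<Sum>t<T. gap (Suc t) 1) + real n * \<bar>L\<bar> * (\<Sum>t<T. dev_x (Suc t) 1)"
proof -
  have "regret_d n f x xstar j T = (\<Sum>t<T. Fsum n f (Suc t) (x j (Suc t)) - Fsum n f (Suc t) (xstar (Suc t)))"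
    unfolding regret_d_def by (simp add: sum.atLeast1_atMost_eq sum_subtractf)
  also have "\<dots> \<le> (\<Sum>t<T. gap (Suc t) 1 + real n * \<bar>L\<bar> * dev_x (Suc t) 1)"
    using Fsum_x_le[OF j] by (intro sum_mono) simp
  finally show ?thesis by (simp add: sum.distrib sum_distrib_left)
qed

end

context domfw_run
begin

lemma sum_dev_x_round_start_le: "(\<Sum>t<T. dev_x (Suc t) 1) \<le> consensus_bound * (1 + real T * \<alpha>)"
proof -
  define \<omega> where "\<omega> = 1 - mix_rate"
  have \<omega>: "0 < \<omega>" "\<omega> \<le> 1" using mix_rate_bounds by (auto simp: \<omega>_def)
  have sM: "0 \<le> sqrt (real n) * M" using diameter_nonneg by simp
  have "(\<Sum>t<T. dev_x (Suc t) 1) \<le> (sqrt (real n) * M + real T * (\<alpha> * (sqrt (real n) * M) / \<omega>)) / \<omega>"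
    using sum_dev_x_round_start \<omega> by (simp add: \<omega>_def le_divide_eq mult.commute)
  also have "\<dots> = sqrt (real n) * M / \<omega> + real T * \<alpha> * consensus_bound"
    using \<omega> by (simp add: consensus_bound_def \<omega>_def[symmetric] field_simps power2_eq_square)
  also have "sqrt (real n) * M / \<omega> \<le> consensus_bound"
    unfolding consensus_bound_def \<omega>_def[symmetric] using \<omega> sM
    by (simp add: divide_left_mono power2_eq_square mult_left_le_one_le)
  finally show ?thesis by (simp add: algebra_simps)
qed

lemma sum_dev_x_le: "\<alpha> * (\<Sum>t<T. \<Sum>k<K. dev_x (Suc t) (Suc k)) \<le> inner_consensus_bound * (1 + real T * \<alpha>)"
proof -
  define \<omega> where "\<omega> = 1 - mix_rate"
  have \<omega>: "0 < \<omega>" using mix_rate_bounds by (auto simp: \<omega>_def)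
  have "\<omega> * (\<Sum>t<T. \<Sum>k<K. dev_x (Suc t) (Suc k)) = (\<Sum>t<T. \<omega> * (\<Sum>k<K. dev_x (Suc t) (Suc k)))"
    by (rule sum_distrib_left)
  also have "\<dots> \<le> (\<Sum>t<T. dev_x (Suc t) 1 + real K * (\<alpha> * (sqrt (real n) * M)))"
    unfolding \<omega>_def using sum_dev_x_inner by (intro sum_mono) simp
  finally have "\<omega> * (\<Sum>t<T. \<Sum>k<K. dev_x (Suc t) (Suc k))
      \<le> (\<Sum>t<T. dev_x (Suc t) 1 + real K * (\<alpha> * (sqrt (real n) * M)))" .
  then have "\<alpha> * (\<omega> * (\<Sum>t<T. \<Sum>k<K. dev_x (Suc t) (Suc k)))
      \<le> \<alpha> * ((\<Sum>t<T. dev_x (Suc t) 1) + real T * (real K * (\<alpha> * (sqrt (real n) * M))))"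
    using step_size_pos by (intro mult_left_mono) (simp_all add: sum.distrib)
  also have "\<dots> = \<alpha> * (\<Sum>t<T. dev_x (Suc t) 1) + real T * \<alpha> * (real K * \<alpha>) * (sqrt (real n) * M)"
    by (simp add: algebra_simps)
  also have "\<dots> \<le> consensus_bound * (1 + real T * \<alpha>) + real T * \<alpha> * 1 * consensus_bound"
  proof (rule add_mono)
    have "\<alpha> * (\<Sum>t<T. dev_x (Suc t) 1) \<le> (\<Sum>t<T. dev_x (Suc t) 1)"
      using step_size_pos step_size_le_1 by (intro mult_left_le_one_le sum_nonneg) auto
    then show "\<alpha> * (\<Sum>t<T. dev_x (Suc t) 1) \<le> consensus_bound * (1 + real T * \<alpha>)"
      using sum_dev_x_round_start_le by linarith
    show "real T * \<alpha> * (real K * \<alpha>) * (sqrt (real n) * M) \<le> real T * \<alpha> * 1 * consensus_bound"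
      using step_size_pos K_step_size_le_1 consensus_bound_ge consensus_bound_nonneg diameter_nonneg
      by (intro mult_mono mult_left_mono) auto
  qed
  also have "\<dots> \<le> 2 * consensus_bound * (1 + real T * \<alpha>)"
    using consensus_bound_ge consensus_bound_nonneg diameter_nonneg step_size_pos by (simp add: algebra_simps)
  finally show ?thesis
    using \<omega> by (simp add: inner_consensus_bound_def \<omega>_def[symmetric] field_simps)
qed

lemma sum_dev_xh_le: "\<alpha> * (\<Sum>t<T. \<Sum>k<K. dev_xh (Suc t) (Suc k)) \<le> inner_consensus_bound * (1 + real T * \<alpha>)"
proof -
  have "dev_xh (Suc t) (Suc k) \<le> dev_x (Suc t) (Suc k)" if "t < T" "k < K" for t k
    using dev_xh_le[of "Suc t" "Suc k"] that mix_rate_bounds mult_left_le_one_le[of "dev_x (Suc t) (Suc k)" mix_rate]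
    by simp
  then have "(\<Sum>t<T. \<Sum>k<K. dev_xh (Suc t) (Suc k)) \<le> (\<Sum>t<T. \<Sum>k<K. dev_x (Suc t) (Suc k))"
    by (intro sum_mono) auto
  then show ?thesis
    using sum_dev_x_le step_size_pos by (meson mult_left_mono less_imp_le order_trans)
qed

lemma sum_dev_g_le: "\<alpha> * (\<Sum>t<T. \<Sum>k<K. dev_g (Suc t) (Suc k)) \<le> tracking_bound * (1 + real T * \<alpha>)"
proof -
  define \<omega> where "\<omega> = 1 - mix_rate"
  have \<omega>: "0 < \<omega>" using mix_rate_bounds by (auto simp: \<omega>_def)
  let ?Sh = "\<Sum>t<T. \<Sum>k<K. dev_xh (Suc t) (Suc k)"
  have "\<omega> * (\<Sum>t<T. \<Sum>k<K. dev_g (Suc t) (Suc k)) = (\<Sum>t<T. \<omega> * (\<Sum>k<K. dev_g (Suc t) (Suc k)))"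
    by (rule sum_distrib_left)
  also have "\<dots> \<le> (\<Sum>t<T. sqrt (real n) * Bg + Lg * (2 * (\<Sum>k<K. dev_xh (Suc t) (Suc k))
                                          + real K * (sqrt (real n) * (\<alpha> * M))))"
    unfolding \<omega>_def using sum_dev_g_inner by (intro sum_mono) simp
  also have "\<dots> = real T * (sqrt (real n) * Bg)
      + Lg * (2 * ?Sh + real T * (real K * (sqrt (real n) * (\<alpha> * M))))"
    by (simp add: sum.distrib sum_distrib_left[symmetric])
  finally have "\<alpha> * (\<omega> * (\<Sum>t<T. \<Sum>k<K. dev_g (Suc t) (Suc k)))
      \<le> \<alpha> * (real T * (sqrt (real n) * Bg)
      + Lg * (2 * ?Sh + real T * (real K * (sqrt (real n) * (\<alpha> * M)))))"
    using step_size_pos by (intro mult_left_mono) auto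
  also have "\<dots> = real T * \<alpha> * (sqrt (real n) * Bg)
         + Lg * (2 * (\<alpha> * ?Sh) + real T * \<alpha> * (real K * \<alpha>) * (sqrt (real n) * M))"
    by (simp add: algebra_simps)
  also have "\<dots> \<le> real T * \<alpha> * (sqrt (real n) * Bg)
      + Lg * (2 * (inner_consensus_bound * (1 + real T * \<alpha>)) + real T * \<alpha> * 1 * inner_consensus_bound)"
  proof -
    have "real T * \<alpha> * (real K * \<alpha>) * (sqrt (real n) * M) \<le> real T * \<alpha> * 1 * inner_consensus_bound"
      using K_step_size_le_1 step_size_pos consensus_bound_ge inner_consensus_bound_ge diameter_nonneg
      by (intro mult_mono mult_left_mono) auto
    then show ?thesis
      using sum_dev_xh_le Lg_nonneg by (intro add_left_mono mult_left_mono add_mono) auto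
  qed
  also have "\<dots> \<le> (sqrt (real n) * Bg + 3 * Lg * inner_consensus_bound) * (1 + real T * \<alpha>)"
    using step_size_pos Bg_nonneg Lg_nonneg consensus_bound_ge inner_consensus_bound_ge consensus_bound_nonneg inner_consensus_bound_nonneg diameter_nonneg
    by (simp add: algebra_simps mult_left_mono)
  finally show ?thesis
    using \<omega> by (simp add: tracking_bound_def \<omega>_def[symmetric] field_simps)
qed

lemma sum_gap_err_le: "(\<Sum>t<T. \<Sum>k<K. gap_err (Suc t) (Suc k)) \<le> gap_err_bound * (1 + real T * \<alpha>)"
proof -
  have "(\<Sum>t<T. \<Sum>k<K. gap_err (Suc t) (Suc k))
      = M * sqrt (real n) * (\<alpha> * (\<Sum>t<T. \<Sum>k<K. dev_g (Suc t) (Suc k)))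
        + M * sqrt (real n) * Lg * (\<alpha> * (\<Sum>t<T. \<Sum>k<K. dev_xh (Suc t) (Suc k)))
        + real T * \<alpha> * (real K * \<alpha>) * (real n * \<bar>G\<bar> * M\<^sup>2 / 2)"
    by (simp add: gap_err_def sum.distrib sum_distrib_left power2_eq_square algebra_simps)
  also have "\<dots> \<le> M * sqrt (real n) * (tracking_bound * (1 + real T * \<alpha>))
        + M * sqrt (real n) * Lg * (inner_consensus_bound * (1 + real T * \<alpha>))
        + real T * \<alpha> * 1 * (real n * \<bar>G\<bar> * M\<^sup>2 / 2)"
  proof -
    have "real T * \<alpha> * (real K * \<alpha>) \<le> real T * \<alpha> * 1"
      using K_step_size_le_1 step_size_pos by (intro mult_left_mono) auto
    then have "real T * \<alpha> * (real K * \<alpha>) * (real n * \<bar>G\<bar> * M\<^sup>2 / 2)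
        \<le> real T * \<alpha> * 1 * (real n * \<bar>G\<bar> * M\<^sup>2 / 2)"
      by (rule mult_right_mono) simp
    moreover have "M * sqrt (real n) * (\<alpha> * (\<Sum>t<T. \<Sum>k<K. dev_g (Suc t) (Suc k)))
        \<le> M * sqrt (real n) * (tracking_bound * (1 + real T * \<alpha>))"
      using sum_dev_g_le diameter_nonneg by (intro mult_left_mono) auto
    moreover have "M * sqrt (real n) * Lg * (\<alpha> * (\<Sum>t<T. \<Sum>k<K. dev_xh (Suc t) (Suc k)))
        \<le> M * sqrt (real n) * Lg * (inner_consensus_bound * (1 + real T * \<alpha>))"
      using sum_dev_xh_le diameter_nonneg Lg_nonneg by (intro mult_left_mono) auto
    ultimately show ?thesis by linarith
  qed
  also have "\<dots> \<le> gap_err_bound * (1 + real T * \<alpha>)"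
    using step_size_pos by (simp add: gap_err_bound_def algebra_simps)
  finally show ?thesis .
qed

theorem regret_le:
  assumes j: "j < n"
  shows "regret_d n f x xstar j T \<le> regret_const * (1 + real T * \<alpha> + H_var n X f T)"
proof -
  let ?\<tau> = "real T * \<alpha>" and ?H = "H_var n X f T"
  have \<tau>: "0 \<le> ?\<tau>" using step_size_pos by simp
  have "(1 - gap_rate) * (\<Sum>t<T. gap (Suc t) 1) \<le> real n * \<bar>L\<bar> * M + gap_err_bound * (1 + ?\<tau>) + 2 * real n * ?H"
    using sum_gap_round_start sum_gap_err_le by linarith
  also have "\<dots> \<le> (real n * \<bar>L\<bar> * M + gap_err_bound + 2 * real n) * (1 + ?\<tau> + ?H)"
  proof -
    have "0 \<le> real n * \<bar>L\<bar> * M * (?\<tau> + ?H) + gap_err_bound * ?H + 2 * real n * (1 + ?\<tau>)"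
      using \<tau> H_var_nonneg gap_err_bound_nonneg diameter_nonneg by simp
    then show ?thesis by (simp add: algebra_simps)
  qed
  finally have gaps: "(\<Sum>t<T. gap (Suc t) 1) \<le> (real n * \<bar>L\<bar> * M + gap_err_bound + 2 * real n) / (1 - gap_rate) * (1 + ?\<tau> + ?H)"
    using gap_rate_bounds by (simp add: mult.commute pos_le_divide_eq)
  have "consensus_bound * (1 + ?\<tau>) \<le> consensus_bound * (1 + ?\<tau> + ?H)"
    using H_var_nonneg consensus_bound_nonneg by (intro mult_left_mono) auto
  then have "real n * \<bar>L\<bar> * (\<Sum>t<T. dev_x (Suc t) 1) \<le> real n * \<bar>L\<bar> * (consensus_bound * (1 + ?\<tau> + ?H))"
    using sum_dev_x_round_start_le by (intro mult_left_mono) auto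
  then show ?thesis
    using regret_le_sum_gap[OF j] gaps by (simp add: regret_const_def algebra_simps)
qed

end

section \<open>The step-size schedule\<close>

lemma schedule_bounds:
  fixes T :: nat and \<epsilon> \<gamma> \<rho> :: real
  assumes T: "T \<ge> 1" and \<epsilon>: "\<epsilon> > 0" and \<gamma>: "0 < \<gamma>" and \<rho>: "\<rho> \<ge> 1"
    and K: "K = nat \<lceil>\<epsilon> * real T powr \<gamma>\<rceil> + 1"
  shows "real T * (1 / (\<rho> * real K)) \<le> real T powr (1 - \<gamma>) / \<epsilon>"
    and "real (\<Sum>t=1..T. K) \<le> (\<epsilon> + 2) * real T powr (1 + \<gamma>)"
proof -
  define a where "a = \<epsilon> * real T powr \<gamma>"
  have a: "0 < a" unfolding a_def using \<epsilon> T by simp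
  have K_eq: "real K = real_of_int \<lceil>a\<rceil> + 1" unfolding K a_def[symmetric] using a by simp
  have "a \<le> real K" using K_eq le_of_int_ceiling[of a] by linarith
  then have "a \<le> \<rho> * real K" using mult_right_mono[of 1 \<rho> "real K"] \<rho> by simp
  then have "real T * (1 / (\<rho> * real K)) \<le> real T / a"
    using a T by (simp add: divide_left_mono)
  also have "\<dots> = real T powr (1 - \<gamma>) / \<epsilon>"
    using T \<epsilon> by (simp add: a_def powr_diff)
  finally show "real T * (1 / (\<rho> * real K)) \<le> real T powr (1 - \<gamma>) / \<epsilon>" .
  have "1 \<le> real T powr \<gamma>" using T \<gamma> by (intro ge_one_powr_ge_zero) auto
  then have "real T * real K \<le> real T * (\<epsilon> * real T powr \<gamma> + 2 * real T powr \<gamma>)"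
    using K_eq ceiling_correct[of a] T by (intro mult_left_mono) (auto simp: a_def)
  then have "real (\<Sum>t=1..T. K) \<le> real T * (\<epsilon> * real T powr \<gamma> + 2 * real T powr \<gamma>)"
    by simp
  also have "\<dots> = (\<epsilon> + 2) * real T powr (1 + \<gamma>)"
    using T by (simp add: powr_add algebra_simps)
  finally show "real (\<Sum>t=1..T. K) \<le> (\<epsilon> + 2) * real T powr (1 + \<gamma>)" .
qed

text \<open>In Isabelle \<open>log b 0 = 0\<close>, so for \<open>H = 0\<close> the hypothesis forces \<open>\<gamma> = 1\<close>.\<close>

lemma powr_one_minus_le_one_plus:
  fixes T H \<gamma> :: real
  assumes T: "T \<ge> 1" and H: "0 \<le> H" and \<gamma>: "\<gamma> \<le> 1" and cond: "1 - log T H \<le> \<gamma>"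
  shows "T powr (1 - \<gamma>) \<le> 1 + H"
proof (cases "T = 1 \<or> H = 0")
  case True
  then show ?thesis using H \<gamma> cond by (auto simp: log_def)
next
  case False
  then have "T powr (1 - \<gamma>) \<le> T powr (log T H)"
    using cond T by (intro powr_mono) auto
  also have "\<dots> = H" using False T H by simp
  finally show ?thesis by simp
qed

context domfw_setting
begin

lemma regret_le_schedule:
  assumes T: "T \<ge> 1" and \<epsilon>: "\<epsilon> > 0" and \<gamma>: "0 < \<gamma>" "\<gamma> \<le> 1"
    and K: "K = nat \<lceil>\<epsilon> * real T powr \<gamma>\<rceil> + 1"
    and run: "DOMFW n A grad X x1 T (\<lambda>_. K) (\<lambda>_. 1 / (\<rho> * real K)) x xk xh gb gh v"
    and j: "j < n"
  defines "R \<equiv> regret_const * (1 + 1 / \<epsilon>)"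
  shows "regret_d n f x xstar j T \<le> R * (real T powr (1 - \<gamma>) + H_var n X f T)"
    and "1 - log (real T) (H_var n X f T) \<le> \<gamma> \<Longrightarrow>
      regret_d n f x xstar j T \<le> 2 * R * (1 + H_var n X f T)"
proof -
  interpret domfw_run X c r B n E A f grad xstar x1 \<zeta> M L G \<rho> T K "1 / (\<rho> * real K)" x xk xh gb gh v
    using T K run by unfold_locales auto
  let ?H = "H_var n X f T"
  have R: "0 \<le> R" unfolding R_def using regret_const_nonneg \<epsilon> by simp
  have "1 \<le> real T powr (1 - \<gamma>)" using T \<gamma> by (intro ge_one_powr_ge_zero) auto
  moreover have "(1 + 1 / \<epsilon>) * (real T powr (1 - \<gamma>) + ?H)
      = real T powr (1 - \<gamma>) + ?H + (real T powr (1 - \<gamma>) / \<epsilon> + ?H / \<epsilon>)"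
    by (simp add: distrib_left distrib_right)
  moreover have "0 \<le> ?H / \<epsilon>" using H_var_nonneg \<epsilon> by simp
  ultimately have "1 + real T * (1 / (\<rho> * real K)) + ?H \<le> (1 + 1 / \<epsilon>) * (real T powr (1 - \<gamma>) + ?H)"
    using schedule_bounds(1)[OF T \<epsilon> \<gamma>(1) \<rho> K] by linarith
  then have "regret_const * (1 + real T * (1 / (\<rho> * real K)) + ?H) \<le> R * (real T powr (1 - \<gamma>) + ?H)"
    unfolding R_def using regret_const_nonneg by (simp add: mult_left_mono mult.assoc)
  then show main: "regret_d n f x xstar j T \<le> R * (real T powr (1 - \<gamma>) + ?H)"
    using regret_le[OF j] by linarith
  assume "1 - log (real T) ?H \<le> \<gamma>"
  then have "real T powr (1 - \<gamma>) + ?H \<le> 2 * (1 + ?H)"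
    using powr_one_minus_le_one_plus[of "real T" ?H \<gamma>] T H_var_nonneg \<gamma> by simp
  then have "R * (real T powr (1 - \<gamma>) + ?H) \<le> 2 * R * (1 + ?H)"
    using mult_left_mono[OF _ R] by (simp add: mult.assoc mult.left_commute)
  then show "regret_d n f x xstar j T \<le> 2 * R * (1 + ?H)"
    using main by linarith
qed

end

theorem corollary2:
  fixes n :: nat
    and E :: "nat \<Rightarrow> (nat \<times> nat) set"
    and A :: "nat \<Rightarrow> nat \<Rightarrow> nat \<Rightarrow> real"
    and X :: "'a::euclidean_space set"
    and f :: "nat \<Rightarrow> nat \<Rightarrow> 'a \<Rightarrow> real"
    and grad :: "nat \<Rightarrow> nat \<Rightarrow> 'a \<Rightarrow> 'a"
    and xstar :: "nat \<Rightarrow> 'a"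
    and x1 :: "nat \<Rightarrow> 'a"
    and \<zeta> M L G \<rho> \<epsilon>\<^sub>2 \<gamma>\<^sub>2 :: real
  assumes n_pos: "1 \<le> n"
    and graph_edges: "\<And>t. t \<ge> 1 \<Longrightarrow> E t \<subseteq> {..<n} \<times> {..<n}"
    and A_support: "\<And>t i j. t \<ge> 1 \<Longrightarrow> i < n \<Longrightarrow> j < n \<Longrightarrow>
                      A t i j \<ge> 0 \<and> (A t i j > 0 \<longleftrightarrow> ((j, i) \<in> E t \<or> j = i))"
    and A1a: "\<zeta> > 0" "\<And>t i j. t \<ge> 1 \<Longrightarrow> i < n \<Longrightarrow> j < n \<Longrightarrow> A t i j > 0 \<Longrightarrow> A t i j > \<zeta>"
    and A1b: "\<And>t. t \<ge> 1 \<Longrightarrow> strongly_connected n (E t)"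
    and A1c: "\<And>t i. t \<ge> 1 \<Longrightarrow> i < n \<Longrightarrow> (\<Sum>j<n. A t i j) = 1"
             "\<And>t j. t \<ge> 1 \<Longrightarrow> j < n \<Longrightarrow> (\<Sum>i<n. A t i j) = 1"
    and A2: "convex X" "compact X" "\<And>y z. y \<in> X \<Longrightarrow> z \<in> X \<Longrightarrow> norm (y - z) \<le> M"
    and A3: "\<And>i t y z. i < n \<Longrightarrow> t \<ge> 1 \<Longrightarrow> y \<in> X \<Longrightarrow> z \<in> X \<Longrightarrow>
               \<bar>f i t y - f i t z\<bar> \<le> L * norm (y - z)"
    and A4: "\<And>i t y z. i < n \<Longrightarrow> t \<ge> 1 \<Longrightarrow> y \<in> X \<Longrightarrow> z \<in> X \<Longrightarrow>
               f i t y - f i t z \<le> inner (grad i t z) (y - z) + G / 2 * (norm (y - z))\<^sup>2"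
    and convex_f: "\<And>i t. i < n \<Longrightarrow> t \<ge> 1 \<Longrightarrow> convex_on X (f i t)"
    and grad_f: "\<And>i t y. i < n \<Longrightarrow> t \<ge> 1 \<Longrightarrow> y \<in> X \<Longrightarrow>
               (f i t has_derivative (\<lambda>h. inner (grad i t y) h)) (at y within X)"
    and xstar_min: "\<And>t. t \<ge> 1 \<Longrightarrow> xstar t \<in> X \<and> (\<forall>z\<in>X. Fsum n f t (xstar t) \<le> Fsum n f t z)"
    and init: "\<And>i. i < n \<Longrightarrow> x1 i \<in> X"
    and HT_small: "(\<lambda>T. H_var n X f T) \<in> o(\<lambda>T. real T)"
    and params: "\<rho> \<ge> 1" "\<epsilon>\<^sub>2 > 0" "0 < \<gamma>\<^sub>2" "\<gamma>\<^sub>2 \<le> 1"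
  shows "\<exists>C. \<forall>T\<ge>1.
           let K = (\<lambda>t::nat. nat \<lceil>\<epsilon>\<^sub>2 * real T powr \<gamma>\<^sub>2\<rceil> + 1);
               al = (\<lambda>t::nat. 1 / (\<rho> * real (K t)));
               N_LO = real (\<Sum>t=1..T. K t);
               H = H_var n X f T
           in (\<forall>x xk xh gb gh v. DOMFW n A grad X x1 T K al x xk xh gb gh v \<longrightarrow>
                 (\<forall>j<n. regret_d n f x xstar j T \<le> C * (real T powr (1 - \<gamma>\<^sub>2) + H) \<and>
                        (1 - log (real T) H \<le> \<gamma>\<^sub>2 \<longrightarrow> regret_d n f x xstar j T \<le> C * (1 + H))))
              \<and> N_LO \<le> C * real T powr (1 + \<gamma>\<^sub>2)
              \<and> (\<gamma>\<^sub>2 = 1 - log (real T) H \<longrightarrow> N_LO \<le> C * real T powr (2 - log (real T) H))"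
proof -
  obtain c r B where "direction_basis X c r B"
    using ex_direction_basis[OF A2(1)] xstar_min[of 1] by blast
  then interpret domfw_setting X c r B n E A f grad xstar x1 \<zeta> M L G \<rho>
    by (rule domfw_setting.intro) (unfold_locales; fact assms)
  define R where "R = regret_const * (1 + 1 / \<epsilon>\<^sub>2)"
  define C where "C = 2 * R + \<epsilon>\<^sub>2 + 2"
  have C: "R \<le> C" "2 * R \<le> C" "\<epsilon>\<^sub>2 + 2 \<le> C"
    using regret_const_nonneg params by (simp_all add: C_def R_def)
  have "real (\<Sum>t=1..T. nat \<lceil>\<epsilon>\<^sub>2 * real T powr \<gamma>\<^sub>2\<rceil> + 1) \<le> C * real T powr (1 + \<gamma>\<^sub>2)"
    if "T \<ge> 1" for T
    using schedule_bounds(2)[OF that params(2,3,1) refl]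
      mult_right_mono[OF C(3) powr_ge_zero[of "real T" "1 + \<gamma>\<^sub>2"]] by linarith
  moreover have "regret_d n f x xstar j T \<le> C * (real T powr (1 - \<gamma>\<^sub>2) + H_var n X f T)"
    and "1 - log (real T) (H_var n X f T) \<le> \<gamma>\<^sub>2 \<Longrightarrow> regret_d n f x xstar j T \<le> C * (1 + H_var n X f T)"
    if "T \<ge> 1" "j < n"
      "DOMFW n A grad X x1 T (\<lambda>_. nat \<lceil>\<epsilon>\<^sub>2 * real T powr \<gamma>\<^sub>2\<rceil> + 1)
         (\<lambda>_. 1 / (\<rho> * real (nat \<lceil>\<epsilon>\<^sub>2 * real T powr \<gamma>\<^sub>2\<rceil> + 1))) x xk xh gb gh v"
    for T j x xk xh gb gh v
    using regret_le_schedule[OF that(1) params(2-4) refl that(3,2), folded R_def] C H_var_nonneg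
      mult_right_mono[OF C(1), of "real T powr (1 - \<gamma>\<^sub>2) + H_var n X f T"]
      mult_right_mono[OF C(2), of "1 + H_var n X f T"]
    by force+
  ultimately show ?thesis
    unfolding Let_def by (intro exI[of _ C]) auto
qed

end
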